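(* Let $D:=\{(j,w): w\in W,\ 1\le j\le N_w\}$, equipped with the measure $\mu:=\sum_j \delta_j\otimes\mathcal L^1\llcorner D(j)$, where $D(j)=\{w:(j,w)\in D\}$. Define $\mathtt s:D\to J$ by $$\mathtt s(j,w):=|D u_0|\big((-\infty,\gamma_{j,w}(0))\big)+\big|w-u_0(\gamma_{j,w}(0)-)\big|.$$ Then $\mathtt s$ is injective outside a $\mu$-negligible set (namely outside the at most countably many $w$ with $\mathcal L^1(\{u_0=w\})>0$) and $\mathtt s_\sharp\mu=\mathcal L^1\llcorner J$; hence $\mathtt s$ is a measure preserving bijection between $(D,\mu)$ and $(J,\mathcal L^1)$ up to negligible sets.
   Context: Standing setting: $f\in C^2(\mathbb R)$; $u_0\in L^1(\mathbb R)$ of bounded total variation $\mathrm{TV}(u_0)$, compactly supported, values in $[0,M]$; $u$ the entropy solution of $u_t+f(u)_x=0$, $u(0)=u_0$, right-continuous in $x$; $J:=(0,\mathrm{TV}(u_0)]$; $u_0(y-)$ is the left limit. $W\subset[0,M]$ is a set of full $\mathcal L^1$-measure such that for $w\in W$ the level set $\{u>w\}$ is bounded by finitely many ordered Lipschitz curves $\gamma_{j,w}$, $1\le j\le N_w$, whose initial points $\{\gamma_{j,w}(0)\}_j$ are exactly the points of $\partial\{u_0>w\}$ (counted so that $N_w=\mathcal H^0(\partial\{u_0>w\})$), with $u_0$ crossing the value $w$ upward at $\gamma_{j,w}(0)$ for $j$ odd and downward for $j$ even. *)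

theory Defs
  imports "HOL-Analysis.Analysis"
begin

text \<open>For a right-continuous BV
function on the line, pvar u {..<a} equals the variation measure of the
distributional derivative on the open half-line (-inf,a), and pvar u UNIV
equals the total variation.\<close>
definition pvar :: "(real \<Rightarrow> real) \<Rightarrow> real set \<Rightarrow> ennreal" where
  "pvar u S = (SUP xs \<in> {xs. sorted_wrt (<) xs \<and> set xs \<subseteq> S}.
      ennreal (\<Sum>i < length xs - 1. \<bar>u (xs ! Suc i) - u (xs ! i)\<bar>))"

definition TV :: "(real \<Rightarrow> real) \<Rightarrow> real" where
  "TV u = enn2real (pvar u UNIV)"

definition left_lim :: "(real \<Rightarrow> real) \<Rightarrow> real \<Rightarrow> real" where
  "left_lim u x = Lim (at_left x) u"

definition crosses_up :: "(real \<Rightarrow> real) \<Rightarrow> real \<Rightarrow> real \<Rightarrow> bool" where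
  "crosses_up u w x \<longleftrightarrow> (\<exists>\<delta>>0. (\<forall>y\<in>{x-\<delta><..<x}. u y \<le> w) \<and> (\<forall>y\<in>{x<..<x+\<delta>}. u y > w))"

definition crosses_down :: "(real \<Rightarrow> real) \<Rightarrow> real \<Rightarrow> real \<Rightarrow> bool" where
  "crosses_down u w x \<longleftrightarrow> (\<exists>\<delta>>0. (\<forall>y\<in>{x-\<delta><..<x}. u y > w) \<and> (\<forall>y\<in>{x<..<x+\<delta>}. u y \<le> w))"

definition sfun :: "(real \<Rightarrow> real) \<Rightarrow> (nat \<Rightarrow> real \<Rightarrow> real \<Rightarrow> real) \<Rightarrow> nat \<Rightarrow> real \<Rightarrow> real" where
  "sfun u0 \<gamma> j w = enn2real (pvar u0 {..<\<gamma> j w 0}) + \<bar>w - left_lim u0 (\<gamma> j w 0)\<bar>"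

definition Dset :: "real set \<Rightarrow> (real \<Rightarrow> nat) \<Rightarrow> (nat \<times> real) set" where
  "Dset W N = {(j, w). w \<in> W \<and> 1 \<le> j \<and> j \<le> N w}"

definition muD :: "real set \<Rightarrow> (real \<Rightarrow> nat) \<Rightarrow> (nat \<times> real) set \<Rightarrow> ennreal" where
  "muD W N A = (\<Sum>j. emeasure lebesgue {w. (j, w) \<in> Dset W N \<and> (j, w) \<in> A})"

end

theory Submission
  imports Defs
begin

text \<open>For \<open>w \<in> W\<close> the superlevel set \<open>{u > w}\<close> changes membership exactly at the crossing
  points \<open>\<gamma> j w 0\<close>, so at any other point \<open>y\<close> we have \<open>u(y) > w\<close> iff an odd number of crossing
  points lies left of \<open>y\<close>. Counting, along a fine grid left of \<open>x\<close>, the levels crossed between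
  consecutive grid points therefore yields the coarea formula
  \<open>|Du|((-\<infinity>, x)) = \<integral> #{j. \<gamma> j w 0 < x} dw\<close>. Given \<open>t\<close>, let \<open>x\<close> be the point where the
  variation passes \<open>t\<close>: the pairs crossing left of \<open>x\<close> have \<open>s \<le> t\<close> and total mass
  \<open>|Du|((-\<infinity>, x))\<close>, while of those crossing at \<open>x\<close> exactly the levels within distance
  \<open>t - |Du|((-\<infinity>, x))\<close> of \<open>u(x-)\<close> have \<open>s \<le> t\<close>, and almost every such level does cross at \<open>x\<close>.
  Hence \<open>\<mu>{s \<le> t} = t\<close>, and Dynkin's argument extends this to all Borel sets. If \<open>s\<close> takes the
  same value at two different crossing points, \<open>u\<close> has no variation between them, so it is
  constant there and its level set has positive measure.\<close>

section \<open>Pointwise variation\<close>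

definition list_var :: "(real \<Rightarrow> real) \<Rightarrow> real list \<Rightarrow> real" where
  "list_var u xs = (\<Sum>i < length xs - 1. \<bar>u (xs ! Suc i) - u (xs ! i)\<bar>)"

lemma pvar_eq_SUP_list_var:
  "pvar u S = (SUP xs \<in> {xs. sorted_wrt (<) xs \<and> set xs \<subseteq> S}. ennreal (list_var u xs))"
  by (simp add: pvar_def list_var_def)

lemma list_var_nonneg: "0 \<le> list_var u xs"
  unfolding list_var_def by (auto intro!: sum_nonneg)

lemma list_var_Nil [simp]: "list_var u [] = 0"
  and list_var_singleton [simp]: "list_var u [x] = 0"
  by (simp_all add: list_var_def)

lemma list_var_snoc:
  assumes "xs \<noteq> []"
  shows "list_var u (xs @ [y]) = list_var u xs + \<bar>u y - u (last xs)\<bar>"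
proof -
  obtain n where n: "length xs = Suc n" using assms by (cases xs) auto
  have "list_var u (xs @ [y]) = (\<Sum>i < Suc n. \<bar>u ((xs @ [y]) ! Suc i) - u ((xs @ [y]) ! i)\<bar>)"
    by (simp add: list_var_def n)
  also have "\<dots> = (\<Sum>i < n. \<bar>u ((xs @ [y]) ! Suc i) - u ((xs @ [y]) ! i)\<bar>) + \<bar>u y - u (last xs)\<bar>"
    using n assms by (simp add: nth_append last_conv_nth)
  also have "(\<Sum>i < n. \<bar>u ((xs @ [y]) ! Suc i) - u ((xs @ [y]) ! i)\<bar>) = list_var u xs"
    unfolding list_var_def n by (intro sum.cong) (auto simp: nth_append n)
  finally show ?thesis .
qed

lemma sorted_wrt_less_le_last: "sorted_wrt (<) xs \<Longrightarrow> z \<in> set xs \<Longrightarrow> z \<le> (last xs :: real)"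
  by (induction xs rule: rev_induct) (auto simp: sorted_wrt_append)

lemma list_var_le_pvar: "sorted_wrt (<) xs \<Longrightarrow> set xs \<subseteq> S \<Longrightarrow> ennreal (list_var u xs) \<le> pvar u S"
  unfolding pvar_eq_SUP_list_var by (rule SUP_upper) auto

lemma pvar_mono: "S \<subseteq> T \<Longrightarrow> pvar u S \<le> pvar u T"
  unfolding pvar_eq_SUP_list_var by (rule SUP_subset_mono) auto

lemma list_var_extend_to_endpoint:
  assumes "sorted_wrt (<) xs" "set xs \<subseteq> {..x}"
  obtains ys where "sorted_wrt (<) ys" "set ys \<subseteq> {..x}" "ys \<noteq> []" "last ys = x"
    "list_var u xs \<le> list_var u ys"
proof (cases "x \<in> set xs")
  case True
  then have "last xs = x"
    using assms sorted_wrt_less_le_last[OF assms(1) True] last_in_set[of xs] by fastforce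
  then show ?thesis using that[of xs] assms True by (cases xs) auto
next
  case False
  then have "\<forall>z\<in>set xs. z < x" using assms(2) by (metis atMost_iff order_le_less subsetD)
  then show ?thesis
    using that[of "xs @ [x]"] that[of "[x]"] assms
    by (cases "xs = []") (auto simp: list_var_snoc sorted_wrt_append list_var_nonneg)
qed

lemma pvar_atMost_add_jump:
  assumes "x < y"
  shows "pvar u {..x} + ennreal \<bar>u y - u x\<bar> \<le> pvar u {..y}"
proof -
  have "pvar u {..x} + ennreal \<bar>u y - u x\<bar> =
      (SUP xs \<in> {xs. sorted_wrt (<) xs \<and> set xs \<subseteq> {..x}}. ennreal (list_var u xs) + ennreal \<bar>u y - u x\<bar>)"
    unfolding pvar_eq_SUP_list_var
    by (rule ennreal_SUP_add_left[symmetric]) (auto intro!: exI[of _ "[]"])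
  also have "\<dots> \<le> pvar u {..y}"
  proof (rule SUP_least)
    fix xs assume "xs \<in> {xs. sorted_wrt (<) xs \<and> set xs \<subseteq> {..x}}"
    then obtain ys where ys: "sorted_wrt (<) ys" "set ys \<subseteq> {..x}" "ys \<noteq> []" "last ys = x"
      "list_var u xs \<le> list_var u ys"
      using list_var_extend_to_endpoint by blast
    have "ennreal (list_var u xs) + ennreal \<bar>u y - u x\<bar> \<le> ennreal (list_var u (ys @ [y]))"
      using ys by (simp add: list_var_nonneg list_var_snoc flip: ennreal_plus)
    also have "\<dots> \<le> pvar u {..y}"
      using ys assms by (intro list_var_le_pvar) (auto simp: sorted_wrt_append)
    finally show "ennreal (list_var u xs) + ennreal \<bar>u y - u x\<bar> \<le> pvar u {..y}" .
  qed
  finally show ?thesis .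
qed

lemma pvar_lessThan_eq_SUP_atMost: "pvar u {..<x} = (SUP z\<in>{..<x}. pvar u {..z})"
proof (rule antisym)
  show "pvar u {..<x} \<le> (SUP z\<in>{..<x}. pvar u {..z})"
    unfolding pvar_eq_SUP_list_var[of u "{..<x}"]
  proof (rule SUP_least)
    fix xs assume xs: "xs \<in> {xs. sorted_wrt (<) xs \<and> set xs \<subseteq> {..<x}}"
    show "ennreal (list_var u xs) \<le> (SUP z\<in>{..<x}. pvar u {..z})"
    proof (cases "xs = []")
      case False
      then have "last xs < x" using xs last_in_set by blast
      moreover have "ennreal (list_var u xs) \<le> pvar u {..last xs}"
        using xs sorted_wrt_less_le_last by (intro list_var_le_pvar) auto
      ultimately show ?thesis by (meson SUP_upper2 lessThan_iff)
    qed simp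
  qed
qed (auto intro!: SUP_least pvar_mono)

lemma pvar_UNIV_eq_SUP_lessThan: "pvar u UNIV = (SUP x. pvar u {..<x})"
proof (rule antisym)
  show "pvar u UNIV \<le> (SUP x. pvar u {..<x})"
    unfolding pvar_eq_SUP_list_var[of u UNIV]
  proof (rule SUP_least)
    fix xs :: "real list" assume xs: "xs \<in> {xs. sorted_wrt (<) xs \<and> set xs \<subseteq> UNIV}"
    have "ennreal (list_var u xs) \<le> pvar u {..<last xs + 1}"
      using xs sorted_wrt_less_le_last by (intro list_var_le_pvar) (auto, fastforce)
    then show "ennreal (list_var u xs) \<le> (SUP x. pvar u {..<x})" by (meson SUP_upper2 UNIV_I)
  qed
qed (auto intro!: SUP_least pvar_mono)

section \<open>Sign changes of finite sequences\<close>

definition sign_changes :: "(nat \<Rightarrow> bool) \<Rightarrow> nat \<Rightarrow> nat" where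
  "sign_changes \<sigma> n = card {i. i < n \<and> \<sigma> i \<noteq> \<sigma> (Suc i)}"

lemma exists_sign_change:
  "\<sigma> a \<noteq> \<sigma> b \<Longrightarrow> a < b \<Longrightarrow> \<exists>i. a \<le> i \<and> i < b \<and> \<sigma> i \<noteq> \<sigma> (Suc i)"
proof (induction b)
  case (Suc b)
  show ?case
  proof (cases "\<sigma> b = \<sigma> (Suc b)")
    case True
    then have "a < b" using Suc.prems by (cases "a = b") auto
    then show ?thesis using Suc True by (metis less_Suc_eq)
  next
    case False
    then show ?thesis using Suc.prems by (intro exI[of _ b]) auto
  qed
qed simp

lemma alternations_le_sign_changes:
  fixes idx :: "nat \<Rightarrow> nat"
  assumes inc: "\<And>j. j < m \<Longrightarrow> idx j < idx (Suc j)" and last: "idx m \<le> n"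
    and alt: "\<And>j. j < m \<Longrightarrow> \<sigma> (idx j) \<noteq> \<sigma> (idx (Suc j))"
  shows "m \<le> sign_changes \<sigma> n"
proof -
  define c where "c j = (SOME i. idx j \<le> i \<and> i < idx (Suc j) \<and> \<sigma> i \<noteq> \<sigma> (Suc i))" for j
  have c: "idx j \<le> c j \<and> c j < idx (Suc j) \<and> \<sigma> (c j) \<noteq> \<sigma> (Suc (c j))" if "j < m" for j
    unfolding c_def
    using someI_ex[OF exists_sign_change[of \<sigma> "idx j" "idx (Suc j)"]] alt[OF that] inc[OF that]
    by blast
  have idx_le: "idx i \<le> idx j" if "i \<le> j" "j \<le> m" for i j
    by (rule lift_Suc_mono_le_ivl[of "{..<m}"]) (use inc that in \<open>auto intro: less_imp_le\<close>)
  have "strict_mono_on {..<m} c"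
  proof (rule strict_mono_onI)
    fix i j assume "i \<in> {..<m}" "j \<in> {..<m}" "i < j"
    then have "c i < idx (Suc i)" "idx (Suc i) \<le> idx j" "idx j \<le> c j"
      using c[of i] c[of j] idx_le[of "Suc i" j] by auto
    then show "c i < c j" by linarith
  qed
  then have "card (c ` {..<m}) = m"
    by (simp add: card_image strict_mono_on_imp_inj_on)
  moreover have "c ` {..<m} \<subseteq> {i. i < n \<and> \<sigma> i \<noteq> \<sigma> (Suc i)}"
  proof
    fix i assume "i \<in> c ` {..<m}"
    then obtain j where "j < m" "i = c j" by auto
    then show "i \<in> {i. i < n \<and> \<sigma> i \<noteq> \<sigma> (Suc i)}"
      using c[of j] idx_le[of "Suc j" m] last by auto
  qed
  ultimately show ?thesis
    unfolding sign_changes_def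
    using card_mono[of "{i. i < n \<and> \<sigma> i \<noteq> \<sigma> (Suc i)}" "c ` {..<m}"] by simp
qed

lemma sign_changes_le_parity_increase:
  fixes a :: "nat \<Rightarrow> nat"
  assumes "\<And>i. i < n \<Longrightarrow> a i \<le> a (Suc i)" "\<And>i. i \<le> n \<Longrightarrow> \<sigma> i = odd (a i)"
  shows "sign_changes \<sigma> n + a 0 \<le> a n"
  using assms
proof (induction n)
  case (Suc n)
  have IH: "sign_changes \<sigma> n + a 0 \<le> a n" and mono: "a n \<le> a (Suc n)"
    using Suc by auto
  show ?case
  proof (cases "\<sigma> n = \<sigma> (Suc n)")
    case True
    then have "{i. i < Suc n \<and> \<sigma> i \<noteq> \<sigma> (Suc i)} = {i. i < n \<and> \<sigma> i \<noteq> \<sigma> (Suc i)}"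
      by (auto simp: less_Suc_eq)
    then show ?thesis using IH mono by (simp add: sign_changes_def)
  next
    case False
    then have "{i. i < Suc n \<and> \<sigma> i \<noteq> \<sigma> (Suc i)} = insert n {i. i < n \<and> \<sigma> i \<noteq> \<sigma> (Suc i)}"
      by (auto simp: less_Suc_eq)
    moreover have "a n \<noteq> a (Suc n)"
      using False Suc.prems(2)[of n] Suc.prems(2)[of "Suc n"] by auto
    then have "a n < a (Suc n)" using mono by simp
    ultimately show ?thesis using IH by (simp add: sign_changes_def)
  qed
qed (simp add: sign_changes_def)

definition level_changes :: "(real \<Rightarrow> real) \<Rightarrow> real list \<Rightarrow> real \<Rightarrow> nat" where
  "level_changes u xs w = sign_changes (\<lambda>i. w < u (xs ! i)) (length xs - 1)"

lemma level_changes_eq_sum_indicator: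
  "(of_nat (level_changes u xs w) :: ennreal) =
    (\<Sum>i < length xs - 1. indicator {min (u (xs ! i)) (u (xs ! Suc i))..<max (u (xs ! i)) (u (xs ! Suc i))} w)"
proof -
  have "(\<Sum>i < length xs - 1. indicator {min (u (xs ! i)) (u (xs ! Suc i))..<max (u (xs ! i)) (u (xs ! Suc i))} w) =
      (\<Sum>i < length xs - 1. of_bool ((w < u (xs ! i)) \<noteq> (w < u (xs ! Suc i))) :: ennreal)"
    by (intro sum.cong) (auto simp: indicator_def min_def max_def)
  also have "\<dots> = of_nat (card ({..<length xs - 1} \<inter> {i. (w < u (xs ! i)) \<noteq> (w < u (xs ! Suc i))}))"
    by (subst sum_of_bool_eq) auto
  finally show ?thesis
    unfolding level_changes_def sign_changes_def by (simp add: Int_def conj_commute)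
qed

lemma borel_measurable_level_changes:
  "(\<lambda>w. of_nat (level_changes u xs w) :: ennreal) \<in> borel_measurable lebesgue"
  unfolding level_changes_eq_sum_indicator by (intro borel_measurable_sum borel_measurable_indicator) auto

lemma nn_integral_level_changes:
  "(\<integral>\<^sup>+ w. of_nat (level_changes u xs w) \<partial>lebesgue) = ennreal (list_var u xs)"
proof -
  have "(\<integral>\<^sup>+ w. of_nat (level_changes u xs w) \<partial>lebesgue) =
      (\<Sum>i < length xs - 1. emeasure lebesgue {min (u (xs ! i)) (u (xs ! Suc i))..<max (u (xs ! i)) (u (xs ! Suc i))})"
    unfolding level_changes_eq_sum_indicator
    by (subst nn_integral_sum) (auto intro!: borel_measurable_indicator)
  also have "\<dots> = (\<Sum>i < length xs - 1. ennreal \<bar>u (xs ! Suc i) - u (xs ! i)\<bar>)"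
    by (intro sum.cong) (auto simp: min_def max_def)
  also have "\<dots> = ennreal (list_var u xs)"
    by (simp add: list_var_def)
  finally show ?thesis .
qed

lemma level_changes_eq_0_outside_range:
  assumes "\<And>x. 0 \<le> u x \<and> u x \<le> M" "w \<notin> {0..M}"
  shows "level_changes u xs w = 0"
proof -
  have "(w < u x) = (w < u y)" for x y
    using assms(1)[of x] assms(1)[of y] assms(2) by auto
  then have "{i. i < length xs - 1 \<and> (w < u (xs ! i)) \<noteq> (w < u (xs ! Suc i))} = {}"
    by blast
  then show ?thesis by (simp add: level_changes_def sign_changes_def)
qed

definition grid :: "real \<Rightarrow> real \<Rightarrow> nat \<Rightarrow> real list" where
  "grid a x n = map (\<lambda>i. a + (x - a) * real i / real (Suc n)) [0..<Suc n]"

lemma length_grid [simp]: "length (grid a x n) = Suc n"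
  by (simp add: grid_def)

lemma nth_grid: "i < Suc n \<Longrightarrow> grid a x n ! i = a + (x - a) * real i / real (Suc n)"
  by (simp add: grid_def del: upt_Suc)

lemma sorted_grid: "a < x \<Longrightarrow> sorted_wrt (<) (grid a x n)"
  unfolding sorted_wrt_iff_nth_less length_grid
  by (auto simp: nth_grid intro!: divide_strict_right_mono)

lemma set_grid_subset: "a < x \<Longrightarrow> set (grid a x n) \<subseteq> {..<x}"
proof
  fix y assume "a < x" "y \<in> set (grid a x n)"
  then obtain i where "i < Suc n" "y = a + (x - a) * (real i / real (Suc n))"
    by (auto simp: in_set_conv_nth nth_grid)
  moreover from \<open>i < Suc n\<close> have "real i / real (Suc n) < 1" by simp
  ultimately show "y \<in> {..<x}"
    using \<open>a < x\<close> mult_strict_left_mono[of "real i / real (Suc n)" 1 "x - a"] by simp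
qed

lemma eventually_grid_point_between:
  assumes "a \<le> l" "l < r" "r \<le> x"
  shows "eventually (\<lambda>n. \<exists>i < Suc n. grid a x n ! i \<in> {l<..<r}) sequentially"
proof -
  have "(\<lambda>n. (x - a) * inverse (real (Suc n))) \<longlonglongrightarrow> 0"
    by (rule tendsto_mult_right_zero[OF LIMSEQ_inverse_real_of_nat])
  from order_tendstoD(2)[OF this, of "r - l"] assms(2)
  have "eventually (\<lambda>n. (x - a) / real (Suc n) < r - l) sequentially"
    by (simp add: divide_inverse)
  then show ?thesis
  proof eventually_elim
    case (elim n)
    define h where "h = (x - a) / real (Suc n)"
    have h: "0 < h" "h < r - l" using assms elim by (simp_all add: h_def)
    define i where "i = nat \<lfloor>(l - a) / h\<rfloor> + 1"
    have "0 \<le> (l - a) / h" using assms h by simp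
    then have "(l - a) / h < real i" "real i \<le> (l - a) / h + 1"
      unfolding i_def by linarith+
    then have lo: "l < a + real i * h" and hi: "a + real i * h \<le> l + h"
      using h by (simp_all add: field_simps)
    have "real i * h < real (Suc n) * h"
      using hi h assms by (simp add: h_def)
    then have "i < Suc n" using h by simp
    moreover have "grid a x n ! i = a + real i * h"
      using \<open>i < Suc n\<close> by (simp add: nth_grid h_def)
    ultimately show ?case using lo hi h by (intro exI[of _ i]) auto
  qed
qed

section \<open>Measures and Borel sets\<close>

lemma suminf_commute_ennreal:
  fixes f :: "nat \<Rightarrow> nat \<Rightarrow> ennreal"
  shows "(\<Sum>i. \<Sum>j. f i j) = (\<Sum>j. \<Sum>i. f i j)"
proof -
  have "(\<Sum>i. \<Sum>j. f i j) = (\<integral>\<^sup>+i. \<integral>\<^sup>+j. f i j \<partial>count_space UNIV \<partial>count_space UNIV)"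
    by (simp add: nn_integral_count_space_nat)
  also have "\<dots> = (\<integral>\<^sup>+j. \<integral>\<^sup>+i. f i j \<partial>count_space UNIV \<partial>count_space UNIV)"
    by (rule nn_integral_count_space_nn_integral) auto
  also have "\<dots> = (\<Sum>j. \<Sum>i. f i j)"
    by (simp add: nn_integral_count_space_nat)
  finally show ?thesis .
qed

lemma suminf_emeasure_eq_nn_integral_card:
  assumes "\<And>j. A j \<in> sets M" "\<And>w. finite {j::nat. w \<in> A j}"
  shows "(\<Sum>j. emeasure M (A j)) = (\<integral>\<^sup>+ w. of_nat (card {j. w \<in> A j}) \<partial>M)"
proof -
  have "(\<Sum>j. indicator (A j) w :: ennreal) = of_nat (card {j. w \<in> A j})" for w
  proof -
    have "(\<Sum>j. indicator (A j) w :: ennreal) = (\<Sum>j\<in>{j. w \<in> A j}. indicator (A j) w)"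
      by (rule suminf_finite[OF assms(2)]) auto
    then show ?thesis by simp
  qed
  moreover have "(\<integral>\<^sup>+ w. (\<Sum>j. indicator (A j) w) \<partial>M) = (\<Sum>j. emeasure M (A j))"
    using assms(1) by (subst nn_integral_suminf) auto
  ultimately show ?thesis by simp
qed

lemma borel_set_induct_atMost [consumes 1, case_names empty atMost compl union]:
  assumes "A \<in> sets borel"
    and empty: "P {}" and atMost: "\<And>a. P {..a}"
    and compl: "\<And>A. A \<in> sets borel \<Longrightarrow> P A \<Longrightarrow> P (- A)"
    and union: "\<And>f. disjoint_family f \<Longrightarrow> (\<And>i. f i \<in> sets borel) \<Longrightarrow> (\<And>i. P (f i)) \<Longrightarrow> P (\<Union>i::nat. f i)"
  shows "P (A :: real set)"
proof -
  have "Int_stable (range atMost :: real set set)"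
    by (auto simp: Int_stable_def)
  moreover have "range atMost \<subseteq> Pow (UNIV :: real set)" by auto
  moreover have "A \<in> sigma_sets UNIV (range atMost)"
    using assms(1) by (simp add: borel_eq_atMost)
  ultimately show ?thesis
  proof (induction rule: sigma_sets_induct_disjoint)
    case (union f)
    then have "\<And>i. f i \<in> sets borel" by (auto simp: borel_eq_atMost)
    with union show ?case by (auto intro: assms(5))
  next
    case (compl A)
    then show ?case using assms(4)[of A] by (simp add: borel_eq_atMost Compl_eq_Diff_UNIV)
  qed (auto intro: empty atMost)
qed

lemma countable_levels_positive_on_interval:
  fixes u :: "real \<Rightarrow> real"
  assumes u: "u \<in> borel_measurable borel"
  shows "countable {w. measure lborel ({x. u x = w} \<inter> {a..b}) \<noteq> 0}"
proof -
  let ?M = "restrict_space lborel {a..b}"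
  have u_M: "u \<in> measurable ?M borel"
    by (rule measurable_restrict_space1) (simp add: u)
  have "finite_measure ?M"
    by (intro finite_measureI) (cases "a \<le> b"; simp add: emeasure_restrict_space space_restrict_space)
  then have "countable {w. measure (distr ?M borel u) {w} \<noteq> 0}"
    using finite_measure.finite_measure_distr[OF _ u_M] finite_measure.countable_support by blast
  moreover have "measure (distr ?M borel u) {w} = measure lborel ({x. u x = w} \<inter> {a..b})" for w
  proof -
    have "measure (distr ?M borel u) {w} = measure ?M (u -` {w} \<inter> space ?M)"
      by (rule measure_distr[OF u_M]) simp
    also have "u -` {w} \<inter> space ?M = {x. u x = w} \<inter> {a..b}"
      by (auto simp: space_restrict_space)
    also have "measure ?M ({x. u x = w} \<inter> {a..b}) = measure lborel ({x. u x = w} \<inter> {a..b})"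
      by (rule measure_restrict_space) auto
    finally show ?thesis .
  qed
  ultimately show ?thesis by simp
qed

lemma countable_levels_of_positive_measure:
  fixes u :: "real \<Rightarrow> real"
  assumes u: "u \<in> borel_measurable borel"
  shows "countable {w. emeasure lebesgue {x. u x = w} \<noteq> 0}"
proof -
  have level: "{x. u x = w} \<in> sets borel" for w
  proof -
    have "{x \<in> space borel. u x = w} \<in> sets borel" using u by measurable
    then show ?thesis by simp
  qed
  have "{w. emeasure lebesgue {x. u x = w} \<noteq> 0} \<subseteq>
      (\<Union>n::nat. {w. measure lborel ({x. u x = w} \<inter> {-real n..real n}) \<noteq> 0})"
  proof
    fix w assume w: "w \<in> {w. emeasure lebesgue {x. u x = w} \<noteq> 0}"
    have "\<exists>n::nat. x \<in> {-real n..real n}" for x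
    proof -
      obtain n :: nat where "\<bar>x\<bar> \<le> real n" using real_arch_simple by blast
      then show ?thesis by (intro exI[of _ n]) (auto simp: abs_le_iff)
    qed
    then have "{x. u x = w} = (\<Union>n. {x. u x = w} \<inter> {-real n..real n})" by blast
    with w level have "emeasure lborel (\<Union>n. {x. u x = w} \<inter> {-real n..real n}) \<noteq> 0" by simp
    then obtain n :: nat where n: "emeasure lborel ({x. u x = w} \<inter> {-real n..real n}) \<noteq> 0"
      using emeasure_UN_eq_0[of lborel "\<lambda>n. {x. u x = w} \<inter> {-real n..real n}"] level by fastforce
    have "emeasure lborel ({x. u x = w} \<inter> {-real n..real n}) \<le> emeasure lborel {-real n..real n}"
      by (rule emeasure_mono) auto
    then have "measure lborel ({x. u x = w} \<inter> {-real n..real n}) \<noteq> 0"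
      using n by (auto simp: measure_def enn2real_eq_0_iff top_unique)
    then show "w \<in> (\<Union>n::nat. {w. measure lborel ({x. u x = w} \<inter> {-real n..real n}) \<noteq> 0})" by blast
  qed
  then show ?thesis
    by (rule countable_subset) (simp add: countable_levels_positive_on_interval[OF u])
qed

section \<open>Functions of bounded variation\<close>

lemma mono_has_left_limit:
  fixes f :: "real \<Rightarrow> real"
  assumes "mono f"
  obtains l where "(f \<longlongrightarrow> l) (at_left x)"
proof -
  have "(f \<longlongrightarrow> Sup (f ` ({..<x} \<inter> UNIV))) (at x within ({..<x} \<inter> UNIV))"
    by (rule Lim_left_bound[where K = "f x"]) (use assms in \<open>auto simp: mono_def\<close>)
  then show ?thesis using that by auto
qed

lemma bounded_support_vanishes_outside:
  fixes f :: "real \<Rightarrow> real"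
  assumes "bounded {x. f x \<noteq> 0}"
  obtains R where "0 \<le> R" "\<And>x. R < \<bar>x\<bar> \<Longrightarrow> f x = 0"
proof -
  obtain R0 where R0: "\<And>x. f x \<noteq> 0 \<Longrightarrow> \<bar>x\<bar> \<le> R0"
    using assms by (auto simp: bounded_real)
  show ?thesis
  proof (rule that[of "max R0 0"])
    fix x assume "max R0 0 < \<bar>x\<bar>"
    then show "f x = 0" using R0[of x] by linarith
  qed simp
qed

locale bounded_variation =
  fixes u :: "real \<Rightarrow> real"
  assumes pvar_UNIV_finite: "pvar u UNIV < \<infinity>"
begin

definition var_upto :: "real \<Rightarrow> real" where
  "var_upto x = enn2real (pvar u {..x})"

definition var_below :: "real \<Rightarrow> real" where
  "var_below x = enn2real (pvar u {..<x})"

lemma pvar_finite: "pvar u S < \<infinity>"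
  using pvar_mono[of S UNIV u] pvar_UNIV_finite by (meson le_less_trans top_greatest)

lemma pvar_eq_ennreal: "pvar u S = ennreal (enn2real (pvar u S))"
  using pvar_finite[of S] by (simp add: less_top)

lemma pvar_atMost_eq: "pvar u {..x} = ennreal (var_upto x)"
  unfolding var_upto_def by (rule pvar_eq_ennreal)

lemma pvar_lessThan_eq: "pvar u {..<x} = ennreal (var_below x)"
  unfolding var_below_def by (rule pvar_eq_ennreal)

lemma pvar_UNIV_eq: "pvar u UNIV = ennreal (TV u)"
  unfolding TV_def by (rule pvar_eq_ennreal)

lemma var_upto_nonneg: "0 \<le> var_upto x"
  and var_below_nonneg: "0 \<le> var_below x"
  and TV_nonneg: "0 \<le> TV u"
  by (simp_all add: var_upto_def var_below_def TV_def)

lemma var_upto_add_jump: "x < y \<Longrightarrow> var_upto x + \<bar>u y - u x\<bar> \<le> var_upto y"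
  using pvar_atMost_add_jump[of x y u]
  by (simp add: pvar_atMost_eq var_upto_nonneg flip: ennreal_plus)

lemma var_upto_mono: "x \<le> y \<Longrightarrow> var_upto x \<le> var_upto y"
  using var_upto_add_jump[of x y] by (cases "x = y") auto

lemma var_upto_le_var_below:
  assumes "x < y" shows "var_upto x \<le> var_below y"
proof -
  have "{..x} \<subseteq> {..<y}" using assms by auto
  from pvar_mono[OF this, of u] show ?thesis by (simp add: pvar_atMost_eq pvar_lessThan_eq var_below_nonneg)
qed

lemma var_upto_le_TV: "var_upto x \<le> TV u"
  using pvar_mono[of "{..x}" UNIV u] by (simp add: pvar_atMost_eq pvar_UNIV_eq TV_nonneg)

lemma mono_var_below: "mono var_below"
  using pvar_mono[of "{..<x}" "{..<y}" u for x y]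
  by (intro monoI) (simp add: pvar_lessThan_eq var_below_nonneg)

lemma tendsto_var_upto_at_left: "(var_upto \<longlongrightarrow> var_below x) (at_left x)"
proof (rule order_tendstoI)
  fix a assume a: "a < var_below x"
  show "eventually (\<lambda>y. a < var_upto y) (at_left x)"
  proof (cases "a < 0")
    case True then show ?thesis using var_upto_nonneg by (simp add: less_le_trans)
  next
    case False
    then have "ennreal a < pvar u {..<x}" using a by (simp add: pvar_lessThan_eq ennreal_less_iff)
    then obtain z where z: "z < x" "ennreal a < pvar u {..z}"
      unfolding pvar_lessThan_eq_SUP_atMost less_SUP_iff by auto
    then have "a < var_upto z" using False by (simp add: pvar_atMost_eq ennreal_less_iff)
    then show ?thesis
      unfolding eventually_at_left_field using z(1) var_upto_mono[of z]
      by (intro exI[of _ z]) (auto intro: less_le_trans)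
  qed
next
  fix a assume a: "var_below x < a"
  have "eventually (\<lambda>y. y < x) (at_left x)"
    by (simp add: eventually_at_filter)
  then show "eventually (\<lambda>y. var_upto y < a) (at_left x)"
    by (rule eventually_mono) (use var_upto_le_var_below a in \<open>auto intro: le_less_trans\<close>)
qed

lemma mono_var_upto_add: "mono (\<lambda>x. var_upto x + u x)"
  and mono_var_upto_diff: "mono (\<lambda>x. var_upto x - u x)"
proof -
  have jump: "var_upto x + \<bar>u y - u x\<bar> \<le> var_upto y" if "x \<le> y" for x y
    using var_upto_add_jump[of x y] that by (cases "x = y") auto
  show "mono (\<lambda>x. var_upto x + u x)"
  proof (rule monoI)
    fix x y :: real assume "x \<le> y"
    from jump[OF this] show "var_upto x + u x \<le> var_upto y + u y" by arith
  qed
  show "mono (\<lambda>x. var_upto x - u x)"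
  proof (rule monoI)
    fix x y :: real assume "x \<le> y"
    from jump[OF this] show "var_upto x - u x \<le> var_upto y - u y" by arith
  qed
qed

lemma borel_measurable_u: "u \<in> borel_measurable borel"
proof -
  have "(\<lambda>x. ((var_upto x + u x) - (var_upto x - u x)) / 2) \<in> borel_measurable borel"
    using borel_measurable_mono[OF mono_var_upto_add] borel_measurable_mono[OF mono_var_upto_diff]
    by measurable
  then show ?thesis by simp
qed

lemma tendsto_left_lim: "(u \<longlongrightarrow> left_lim u x) (at_left x)"
proof -
  obtain l where "((\<lambda>x. var_upto x + u x) \<longlongrightarrow> l) (at_left x)"
    using mono_has_left_limit[OF mono_var_upto_add] .
  from tendsto_diff[OF this tendsto_var_upto_at_left]
  have "(u \<longlongrightarrow> l - var_below x) (at_left x)" by simp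
  then show ?thesis
    unfolding left_lim_def using tendsto_Lim[OF trivial_limit_at_left_real] by metis
qed

lemma var_below_add_left_jump: "var_below x + \<bar>u x - left_lim u x\<bar> \<le> var_upto x"
proof (rule tendsto_le[OF trivial_limit_at_left_real tendsto_const])
  show "((\<lambda>z. var_upto z + \<bar>u x - u z\<bar>) \<longlongrightarrow> var_below x + \<bar>u x - left_lim u x\<bar>) (at_left x)"
    by (intro tendsto_intros tendsto_var_upto_at_left tendsto_left_lim)
  show "eventually (\<lambda>z. var_upto z + \<bar>u x - u z\<bar> \<le> var_upto x) (at_left x)"
    using var_upto_add_jump[of _ x] by (auto simp: eventually_at_left_field intro: exI[of _ "x - 1"])
qed

lemma borel_measurable_left_lim: "left_lim u \<in> borel_measurable borel"
proof (rule borel_measurable_LIMSEQ_real)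
  fix x :: real
  have "filterlim (\<lambda>n. x - inverse (real (Suc n))) (at_left x) sequentially"
  proof (rule filterlim_at_withinI)
    show "filterlim (\<lambda>n. x - inverse (real (Suc n))) (nhds x) sequentially"
      using tendsto_diff[OF tendsto_const LIMSEQ_inverse_real_of_nat, of x] by simp
  qed (auto intro: always_eventually)
  then show "(\<lambda>n. u (x - inverse (real (Suc n)))) \<longlonglongrightarrow> left_lim u x"
    by (rule filterlim_compose[OF tendsto_left_lim])
qed (use borel_measurable_u in measurable)

end

section \<open>Level crossings\<close>

lemma downward_closed_eq_atLeastAtMost_card:
  fixes A :: "nat set"
  assumes "A \<subseteq> {1..n}" "\<And>i j. j \<in> A \<Longrightarrow> 1 \<le> i \<Longrightarrow> i \<le> j \<Longrightarrow> i \<in> A"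
  shows "A = {1..card A}"
proof (cases "A = {}")
  case False
  have "finite A" using assms(1) finite_subset by blast
  then have max: "Max A \<in> A" "\<forall>a\<in>A. a \<le> Max A" using False by simp_all
  have "A = {1..Max A}"
  proof
    show "A \<subseteq> {1..Max A}" using assms(1) max by auto
    show "{1..Max A} \<subseteq> A" using assms(2)[OF max(1)] by auto
  qed
  then obtain a where "A = {1..a}" by blast
  then show ?thesis by simp
qed simp

locale level_crossings = bounded_variation u for u +
  fixes M :: real and W :: "real set" and N :: "real \<Rightarrow> nat"
    and \<gamma> :: "nat \<Rightarrow> real \<Rightarrow> real \<Rightarrow> real" and R :: real
  assumes right_cont: "\<forall>x. continuous (at_right x) u"
    and R_nonneg: "0 \<le> R"
    and support_bound: "\<And>x. R < \<bar>x\<bar> \<Longrightarrow> u x = 0"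
    and range: "\<forall>x. 0 \<le> u x \<and> u x \<le> M"
    and W_sub: "W \<subseteq> {0..M}"
    and W_full: "{0..M} - W \<in> null_sets lebesgue"
    and pts: "\<forall>w\<in>W. {\<gamma> j w 0 | j. 1 \<le> j \<and> j \<le> N w} = frontier {x. u x > w}"
    and ordered: "\<forall>w\<in>W. \<forall>j k. 1 \<le> j \<and> j < k \<and> k \<le> N w \<longrightarrow> \<gamma> j w 0 < \<gamma> k w 0"
    and up: "\<forall>w\<in>W. \<forall>j. 1 \<le> j \<and> j \<le> N w \<and> odd j \<longrightarrow> crosses_up u w (\<gamma> j w 0)"
    and down: "\<forall>w\<in>W. \<forall>j. 1 \<le> j \<and> j \<le> N w \<and> even j \<longrightarrow> crosses_down u w (\<gamma> j w 0)"
begin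

definition crossing :: "nat \<Rightarrow> real \<Rightarrow> real" where
  "crossing j w = \<gamma> j w 0"

definition crossings_below :: "real \<Rightarrow> real \<Rightarrow> nat" where
  "crossings_below w y = card {j \<in> {1..N w}. crossing j w < y}"

definition crossings_upto :: "real \<Rightarrow> real \<Rightarrow> nat" where
  "crossings_upto w y = card {j \<in> {1..N w}. crossing j w \<le> y}"

lemma W_nonneg: "w \<in> W \<Longrightarrow> 0 \<le> w"
  using W_sub by auto

lemma sets_W: "W \<in> sets lebesgue"
proof -
  have "{0..M} \<in> sets lebesgue" "{0..M} - W \<in> sets lebesgue" using W_full by auto
  then have "{0..M} - ({0..M} - W) \<in> sets lebesgue" by (rule sets.Diff)
  moreover have "{0..M} - ({0..M} - W) = W" using W_sub by auto
  ultimately show ?thesis by simp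
qed

lemma crossing_strict_mono: "w \<in> W \<Longrightarrow> 1 \<le> i \<Longrightarrow> i < j \<Longrightarrow> j \<le> N w \<Longrightarrow> crossing i w < crossing j w"
  using ordered by (auto simp: crossing_def)

lemma crossing_less_iff:
  assumes "w \<in> W" "1 \<le> i" "i \<le> N w" "1 \<le> j" "j \<le> N w"
  shows "crossing i w < crossing j w \<longleftrightarrow> i < j"
  using crossing_strict_mono[OF assms(1,2) _ assms(5)] crossing_strict_mono[OF assms(1,4) _ assms(3)]
  by (cases i j rule: linorder_cases) auto

lemma crossing_eq_iff:
  assumes "w \<in> W" "1 \<le> i" "i \<le> N w" "1 \<le> j" "j \<le> N w"
  shows "crossing i w = crossing j w \<longleftrightarrow> i = j"
  using crossing_strict_mono[OF assms(1,2) _ assms(5)] crossing_strict_mono[OF assms(1,4) _ assms(3)]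
  by (cases i j rule: linorder_cases) auto

lemma frontier_superlevel_eq: "w \<in> W \<Longrightarrow> frontier {x. w < u x} = {crossing j w | j. 1 \<le> j \<and> j \<le> N w}"
  using pts by (simp add: crossing_def)

lemma crossing_bounds:
  assumes "w \<in> W" "1 \<le> j" "j \<le> N w"
  shows "-R \<le> crossing j w \<and> crossing j w \<le> R"
proof -
  have "{x. w < u x} \<subseteq> {-R..R}"
  proof
    fix x assume "x \<in> {x. w < u x}"
    then have "\<not> R < \<bar>x\<bar>" using support_bound W_nonneg[OF assms(1)] by force
    then show "x \<in> {-R..R}" by (auto simp: abs_if split: if_splits)
  qed
  then have "closure {x. w < u x} \<subseteq> {-R..R}" by (intro closure_minimal) auto
  moreover have "crossing j w \<in> frontier {x. w < u x}"
    using frontier_superlevel_eq[OF assms(1)] assms by auto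
  ultimately show ?thesis by (auto simp: frontier_def)
qed

lemma crossings_below_eq_atLeastAtMost:
  "w \<in> W \<Longrightarrow> {j \<in> {1..N w}. crossing j w < y} = {1..crossings_below w y}"
  unfolding crossings_below_def
proof (rule downward_closed_eq_atLeastAtMost_card)
  fix i j assume "w \<in> W" "j \<in> {j \<in> {1..N w}. crossing j w < y}" "1 \<le> i" "i \<le> j"
  then show "i \<in> {j \<in> {1..N w}. crossing j w < y}"
    using crossing_strict_mono[of w i j] by (cases "i = j") auto
qed auto

lemma crossing_less_iff_le_crossings_below:
  "w \<in> W \<Longrightarrow> 1 \<le> j \<Longrightarrow> j \<le> N w \<Longrightarrow> crossing j w < y \<longleftrightarrow> j \<le> crossings_below w y"
  using crossings_below_eq_atLeastAtMost[of w y] by (auto simp: set_eq_iff)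

lemma crossings_below_le_N: "crossings_below w y \<le> N w"
  using card_mono[of "{1..N w}" "{j \<in> {1..N w}. crossing j w < y}"]
  by (simp add: crossings_below_def subset_eq)

lemma crossings_below_mono: "y \<le> z \<Longrightarrow> crossings_below w y \<le> crossings_below w z"
  unfolding crossings_below_def by (rule card_mono) auto

lemma crossings_upto_le_crossings_below: "y < z \<Longrightarrow> crossings_upto w y \<le> crossings_below w z"
  unfolding crossings_below_def crossings_upto_def by (rule card_mono) auto

lemma crossings_below_le_crossings_upto: "crossings_below w y \<le> crossings_upto w y"
  unfolding crossings_below_def crossings_upto_def by (rule card_mono) auto

lemma crossings_below_crossing:
  assumes "w \<in> W" "1 \<le> j" "j \<le> N w"
  shows "crossings_below w (crossing j w) = j - 1"
proof -
  have "crossing i w < crossing j w \<longleftrightarrow> i < j" if "i \<in> {1..N w}" for i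
    using crossing_less_iff[OF assms(1) _ _ assms(2,3), of i] that by simp
  then have "{i \<in> {1..N w}. crossing i w < crossing j w} = {1..j - 1}"
    using assms by auto
  then show ?thesis by (simp add: crossings_below_def)
qed

lemma crossings_upto_crossing:
  assumes "w \<in> W" "1 \<le> j" "j \<le> N w"
  shows "crossings_upto w (crossing j w) = j"
proof -
  have "crossing i w \<le> crossing j w \<longleftrightarrow> i \<le> j" if "i \<in> {1..N w}" for i
    using crossing_less_iff[OF assms(1) _ _ assms(2,3), of i] crossing_eq_iff[OF assms(1) _ _ assms(2,3), of i] that
    by (auto simp: order_le_less)
  then have "{i \<in> {1..N w}. crossing i w \<le> crossing j w} = {1..j}"
    using assms by auto
  then show ?thesis by (simp add: crossings_upto_def)
qed

lemma superlevel_near_crossing: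
  assumes "w \<in> W" "1 \<le> j" "j \<le> N w"
  obtains \<delta> where "\<delta> > 0"
    "\<And>z. z \<in> {crossing j w - \<delta><..<crossing j w} \<Longrightarrow> w < u z \<longleftrightarrow> even j"
    "\<And>z. z \<in> {crossing j w<..<crossing j w + \<delta>} \<Longrightarrow> w < u z \<longleftrightarrow> odd j"
proof (cases "odd j")
  case True
  then have "crosses_up u w (crossing j w)" using up assms by (auto simp: crossing_def)
  then obtain \<delta> where "\<delta> > 0" "\<forall>z\<in>{crossing j w - \<delta><..<crossing j w}. u z \<le> w"
    "\<forall>z\<in>{crossing j w<..<crossing j w + \<delta>}. w < u z"
    unfolding crosses_up_def by blast
  then show ?thesis using True by (intro that[of \<delta>]) (auto simp: not_le[symmetric])
next
  case False
  then have "crosses_down u w (crossing j w)" using down assms by (auto simp: crossing_def)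
  then obtain \<delta> where "\<delta> > 0" "\<forall>z\<in>{crossing j w - \<delta><..<crossing j w}. w < u z"
    "\<forall>z\<in>{crossing j w<..<crossing j w + \<delta>}. u z \<le> w"
    unfolding crosses_down_def by blast
  then show ?thesis using False by (intro that[of \<delta>]) (auto simp: not_le[symmetric])
qed

lemma superlevel_iff_on_crossing_free:
  assumes "w \<in> W" "connected I" "\<And>j. 1 \<le> j \<Longrightarrow> j \<le> N w \<Longrightarrow> crossing j w \<notin> I"
    and "y \<in> I" "z \<in> I"
  shows "w < u y \<longleftrightarrow> w < u z"
proof -
  have "x \<notin> frontier {x. w < u x}" if "x \<in> I" for x
    using that assms(3) unfolding frontier_superlevel_eq[OF assms(1)] by blast
  then have "I \<inter> {x. w < u x} = {} \<or> I - {x. w < u x} = {}"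
    using connected_Int_frontier[OF assms(2), of "{x. w < u x}"] by blast
  then show ?thesis using assms(4,5) by blast
qed

lemma superlevel_iff_odd_crossings_below:
  assumes w: "w \<in> W" and y: "\<And>j. 1 \<le> j \<Longrightarrow> j \<le> N w \<Longrightarrow> crossing j w \<noteq> y"
  shows "w < u y \<longleftrightarrow> odd (crossings_below w y)"
proof (cases "crossings_below w y = 0")
  case True
  define z where "z = min y (-R - 1)"
  have free: "crossing j w \<notin> {..y}" if "1 \<le> j" "j \<le> N w" for j
  proof -
    have "\<not> crossing j w < y"
      using crossing_less_iff_le_crossings_below[OF w that, of y] True that by simp
    then show ?thesis using y[OF that] by simp
  qed
  have "w < u y \<longleftrightarrow> w < u z"
    by (rule superlevel_iff_on_crossing_free[OF w path_connected_imp_connected[OF path_connected_Iic] free])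
      (simp_all add: z_def)
  moreover have "u z = 0" using R_nonneg by (intro support_bound) (simp add: z_def)
  ultimately show ?thesis using True W_nonneg[OF w] by simp
next
  case False
  define m where "m = crossings_below w y"
  have m: "1 \<le> m" "m \<le> N w" using False crossings_below_le_N by (auto simp: m_def)
  have "crossing m w < y" using crossing_less_iff_le_crossings_below[OF w m] by (simp add: m_def)
  obtain \<delta> where \<delta>: "\<delta> > 0"
    "\<And>z. z \<in> {crossing m w - \<delta><..<crossing m w} \<Longrightarrow> w < u z \<longleftrightarrow> even m"
    "\<And>z. z \<in> {crossing m w<..<crossing m w + \<delta>} \<Longrightarrow> w < u z \<longleftrightarrow> odd m"
    using superlevel_near_crossing[OF w m] by blast
  define z where "z = min (crossing m w + \<delta> / 2) y"
  have z: "z \<in> {crossing m w<..y}" and "w < u z \<longleftrightarrow> odd m"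
    using \<delta> \<open>crossing m w < y\<close> by (auto simp: z_def)
  moreover have free: "crossing j w \<notin> {crossing m w<..y}" if "1 \<le> j" "j \<le> N w" for j
  proof (cases "crossing j w < y")
    case True
    then have "j \<le> m" using crossing_less_iff_le_crossings_below[OF w that] by (simp add: m_def)
    then have "\<not> crossing m w < crossing j w" using crossing_less_iff[OF w m that] by simp
    then show ?thesis by simp
  qed (use y[OF that] in simp)
  have "w < u y \<longleftrightarrow> w < u z"
    by (rule superlevel_iff_on_crossing_free[OF w path_connected_imp_connected[OF path_connected_Ioc] free])
      (use z \<open>crossing m w < y\<close> in simp_all)
  ultimately show ?thesis by (simp add: m_def)
qed

lemma superlevel_parity:
  assumes w: "w \<in> W"
  obtains a where "crossings_below w y \<le> a" "a \<le> crossings_upto w y" "w < u y \<longleftrightarrow> odd a"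
proof (cases "\<exists>j. 1 \<le> j \<and> j \<le> N w \<and> crossing j w = y")
  case True
  then obtain j where j: "1 \<le> j" "j \<le> N w" "crossing j w = y" by blast
  then have "crossings_below w y = j - 1" "crossings_upto w y = j"
    using crossings_below_crossing[OF w j(1,2)] crossings_upto_crossing[OF w j(1,2)] by auto
  moreover have "odd (j - 1) \<longleftrightarrow> \<not> odd j" using j(1) by (cases j) auto
  ultimately show ?thesis using that[of "j - 1"] that[of j] by (cases "w < u y \<longleftrightarrow> odd j") auto
next
  case False
  then have "w < u y \<longleftrightarrow> odd (crossings_below w y)"
    by (intro superlevel_iff_odd_crossings_below[OF w]) auto
  then show ?thesis using that crossings_below_le_crossings_upto by blast
qed

lemma tendsto_u_at_right: "(u \<longlongrightarrow> u x) (at_right x)"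
  using right_cont continuous_within[of x "{x<..}" u] by simp

lemma crossing_between_limits:
  assumes w: "w \<in> W" and j: "1 \<le> j" "j \<le> N w"
  shows "min (left_lim u (crossing j w)) (u (crossing j w)) \<le> w
    \<and> w \<le> max (left_lim u (crossing j w)) (u (crossing j w))"
proof -
  let ?x = "crossing j w"
  obtain \<delta> where \<delta>: "\<delta> > 0"
    "\<And>z. z \<in> {?x - \<delta><..<?x} \<Longrightarrow> w < u z \<longleftrightarrow> even j"
    "\<And>z. z \<in> {?x<..<?x + \<delta>} \<Longrightarrow> w < u z \<longleftrightarrow> odd j"
    using superlevel_near_crossing[OF w j] by blast
  have left: "eventually (\<lambda>z. w < u z \<longleftrightarrow> even j) (at_left ?x)"
    unfolding eventually_at_left_field using \<delta> by (intro exI[of _ "?x - \<delta>"]) auto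
  have right: "eventually (\<lambda>z. w < u z \<longleftrightarrow> odd j) (at_right ?x)"
    unfolding eventually_at_right_field using \<delta> by (intro exI[of _ "?x + \<delta>"]) auto
  show ?thesis
  proof (cases "odd j")
    case True
    have "left_lim u ?x \<le> w"
      using left True by (intro tendsto_upperbound[OF tendsto_left_lim])
        (auto elim!: eventually_mono)
    moreover have "w \<le> u ?x"
      using right True by (intro tendsto_lowerbound[OF tendsto_u_at_right])
        (auto elim!: eventually_mono)
    ultimately show ?thesis by linarith
  next
    case False
    have "w \<le> left_lim u ?x"
      using left False by (intro tendsto_lowerbound[OF tendsto_left_lim])
        (auto elim!: eventually_mono)
    moreover have "u ?x \<le> w"
      using right False by (intro tendsto_upperbound[OF tendsto_u_at_right])
        (auto elim!: eventually_mono)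
    ultimately show ?thesis by linarith
  qed
qed

lemma crossing_if_strictly_between_limits:
  assumes w: "w \<in> W" and between: "min (left_lim u x) (u x) < w" "w < max (left_lim u x) (u x)"
  obtains j where "1 \<le> j" "j \<le> N w" "crossing j w = x"
proof -
  have "x \<in> frontier {x. w < u x}"
    unfolding frontier_straddle
  proof (intro allI impI)
    fix e :: real assume "e > 0"
    then have "eventually (\<lambda>z. z \<in> {x - e<..<x}) (at_left x)"
      by (intro eventually_at_left_real) simp
    moreover have "eventually (\<lambda>z. (w < u z) \<noteq> (w < u x)) (at_left x)"
    proof (cases "left_lim u x < w")
      case True
      then have "w < u x" using between by linarith
      with order_tendstoD(2)[OF tendsto_left_lim True] show ?thesis
        by (auto elim: eventually_mono)
    next
      case False
      then have "w < left_lim u x" "\<not> w < u x" using between by linarith+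
      with order_tendstoD(1)[OF tendsto_left_lim] show ?thesis
        by (auto elim: eventually_mono)
    qed
    ultimately have "eventually (\<lambda>z. z \<in> {x - e<..<x} \<and> (w < u z) \<noteq> (w < u x)) (at_left x)"
      by (rule eventually_conj)
    then obtain z where "x - e < z" "z < x" "(w < u z) \<noteq> (w < u x)"
      using eventually_happens'[of "at_left x"] by auto
    moreover have "dist x x < e" "dist x z < e"
      using \<open>e > 0\<close> \<open>x - e < z\<close> \<open>z < x\<close> by (simp_all add: dist_real_def)
    ultimately show "(\<exists>y\<in>{x. w < u x}. dist x y < e) \<and> (\<exists>y. y \<notin> {x. w < u x} \<and> dist x y < e)"
      by (cases "w < u x") blast+
  qed
  then show ?thesis using that frontier_superlevel_eq[OF w] by auto
qed

section \<open>The coarea formula\<close>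

lemma level_changes_le_crossings_below:
  assumes w: "w \<in> W" and xs: "sorted_wrt (<) xs" "set xs \<subseteq> {..<x}"
  shows "level_changes u xs w \<le> crossings_below w x"
proof (cases "xs = []")
  case False
  define n where "n = length xs - 1"
  have len: "length xs = Suc n" using False by (simp add: n_def)
  have "\<forall>i. \<exists>a. crossings_below w (xs ! i) \<le> a \<and> a \<le> crossings_upto w (xs ! i)
      \<and> (w < u (xs ! i) \<longleftrightarrow> odd a)"
    using superlevel_parity[OF w] by metis
  then obtain a where a: "\<And>i. crossings_below w (xs ! i) \<le> a i \<and> a i \<le> crossings_upto w (xs ! i)
      \<and> (w < u (xs ! i) \<longleftrightarrow> odd (a i))"
    by metis
  have "a i \<le> a (Suc i)" if "i < n" for i
  proof -
    have "xs ! i < xs ! Suc i" using xs(1) that len by (auto simp: sorted_wrt_iff_nth_less)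
    then show ?thesis using a[of i] a[of "Suc i"] crossings_upto_le_crossings_below by (meson order_trans)
  qed
  then have "level_changes u xs w + a 0 \<le> a n"
    unfolding level_changes_def n_def[symmetric] by (rule sign_changes_le_parity_increase) (use a in auto)
  moreover have "a n \<le> crossings_below w x"
  proof -
    have "xs ! n \<in> set xs" using len by simp
    then have "xs ! n < x" using xs(2) by auto
    then show ?thesis using a[of n] crossings_upto_le_crossings_below by (meson order_trans)
  qed
  ultimately show ?thesis by linarith
qed (simp add: level_changes_def sign_changes_def)

text \<open>The \<open>j\<close>-th gap runs from the \<open>j\<close>-th to the \<open>(j+1)\<close>-st crossing point of \<open>w\<close>; the first
  gap starts at \<open>a\<close> instead and the last one, the \<open>crossings_below w x\<close>-th, ends at \<open>x\<close>.\<close>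
lemma crossings_below_in_gap:
  assumes w: "w \<in> W" and a: "a < -R" and j: "j \<le> crossings_below w x"
    and lo: "(if j = 0 then a else crossing j w) < y"
    and hi: "y < (if j = crossings_below w x then x else crossing (Suc j) w)"
  shows "crossings_below w y = j" "\<And>i. 1 \<le> i \<Longrightarrow> i \<le> N w \<Longrightarrow> crossing i w \<noteq> y"
proof -
  let ?m = "crossings_below w x"
  have m: "?m \<le> N w" by (rule crossings_below_le_N)
  have iff: "crossing i w < y \<longleftrightarrow> i \<le> j" and ne: "crossing i w \<noteq> y" if i: "1 \<le> i" "i \<le> N w" for i
  proof -
    have "(crossing i w < y \<longleftrightarrow> i \<le> j) \<and> crossing i w \<noteq> y"
    proof (cases "i \<le> j")
      case True
      then have "crossing i w \<le> crossing j w"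
        using crossing_less_iff[OF w i, of j] j m i by (cases "i = j") auto
      then show ?thesis using lo True i by (auto split: if_splits)
    next
      case False
      show ?thesis
      proof (cases "i \<le> ?m")
        case True
        then have "crossing (Suc j) w \<le> crossing i w"
          using crossing_less_iff[OF w _ _ i, of "Suc j"] False m by (cases "i = Suc j") auto
        then show ?thesis using hi False True by (auto split: if_splits)
      next
        case i_gt: False
        then have "x \<le> crossing i w"
          using crossing_less_iff_le_crossings_below[OF w i, of x] by simp
        moreover have "y < x" using hi crossing_less_iff_le_crossings_below[OF w, of "Suc j" x] m j
          by (auto split: if_splits)
        ultimately show ?thesis using False by auto
      qed
    qed
    then show "crossing i w < y \<longleftrightarrow> i \<le> j" "crossing i w \<noteq> y" by auto
  qed
  have "{i \<in> {1..N w}. crossing i w < y} = {1..j}" using iff j m by auto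
  then show "crossings_below w y = j" by (simp add: crossings_below_def)
  show "\<And>i. 1 \<le> i \<Longrightarrow> i \<le> N w \<Longrightarrow> crossing i w \<noteq> y" by (rule ne)
qed

lemma crossings_below_le_level_changes:
  assumes w: "w \<in> W" and xs: "sorted_wrt (<) xs"
    and hit: "\<And>j. j \<le> m \<Longrightarrow> \<exists>i < length xs. crossings_below w (xs ! i) = j
      \<and> (\<forall>k. 1 \<le> k \<and> k \<le> N w \<longrightarrow> crossing k w \<noteq> xs ! i)"
  shows "m \<le> level_changes u xs w"
proof -
  define idx where "idx j = (SOME i. i < length xs \<and> crossings_below w (xs ! i) = j
      \<and> (\<forall>k. 1 \<le> k \<and> k \<le> N w \<longrightarrow> crossing k w \<noteq> xs ! i))" for j
  have idx: "idx j < length xs" "crossings_below w (xs ! idx j) = j"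
    "\<And>k. 1 \<le> k \<Longrightarrow> k \<le> N w \<Longrightarrow> crossing k w \<noteq> xs ! idx j" if "j \<le> m" for j
    using someI_ex[OF hit[OF that]] unfolding idx_def[symmetric] by auto
  have inc: "idx j < idx (Suc j)" if "j < m" for j
  proof (rule ccontr)
    assume "\<not> idx j < idx (Suc j)"
    then have "xs ! idx (Suc j) \<le> xs ! idx j"
      using sorted_wrt_nth_less[OF xs, of "idx (Suc j)" "idx j"] idx(1)[of j] that
      by (cases "idx (Suc j) = idx j") auto
    then have "crossings_below w (xs ! idx (Suc j)) \<le> crossings_below w (xs ! idx j)"
      by (rule crossings_below_mono)
    then show False using idx(2)[of j] idx(2)[of "Suc j"] that by simp
  qed
  have parity: "w < u (xs ! idx j) \<longleftrightarrow> odd j" if "j \<le> m" for j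
    using superlevel_iff_odd_crossings_below[OF w idx(3)[OF that]] idx(2)[OF that] by simp
  show ?thesis
    unfolding level_changes_def
  proof (rule alternations_le_sign_changes[of m idx])
    show "idx m \<le> length xs - 1" using idx(1)[of m] by simp
  qed (use inc parity in auto)
qed

lemma eventually_crossings_below_le_level_changes_grid:
  assumes w: "w \<in> W" and a: "a < -R" "a < x"
  shows "eventually (\<lambda>n. crossings_below w x \<le> level_changes u (grid a x n) w) sequentially"
proof -
  let ?m = "crossings_below w x"
  define l where "l j = (if j = 0 then a else crossing j w)" for j
  define r where "r j = (if j = ?m then x else crossing (Suc j) w)" for j
  have m: "?m \<le> N w" by (rule crossings_below_le_N)
  have lr: "a \<le> l j \<and> l j < r j \<and> r j \<le> x" if "j \<le> ?m" for j
  proof -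
    have bounds: "a < crossing k w \<and> crossing k w < x" if "1 \<le> k" "k \<le> ?m" for k
      using crossing_less_iff_le_crossings_below[OF w, of k x] crossing_bounds[OF w, of k] that m a
      by simp
    have "crossing j w < crossing (Suc j) w" if "1 \<le> j" "j < ?m"
      using crossing_strict_mono[OF w, of j "Suc j"] that m by simp
    then show ?thesis
      using that a bounds[of j] bounds[of "Suc j"] by (auto simp: l_def r_def less_imp_le)
  qed
  have "\<forall>j\<in>{..?m}. eventually (\<lambda>n. \<exists>i<Suc n. grid a x n ! i \<in> {l j<..<r j}) sequentially"
    using lr eventually_grid_point_between by blast
  then have "eventually (\<lambda>n. \<forall>j\<in>{..?m}. \<exists>i<Suc n. grid a x n ! i \<in> {l j<..<r j}) sequentially"
    by (rule eventually_ball_finite[rotated]) simp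
  then show ?thesis
  proof eventually_elim
    case (elim n)
    show ?case
    proof (rule crossings_below_le_level_changes[OF w sorted_grid[OF a(2)]])
      fix j assume j: "j \<le> ?m"
      then obtain i where i: "i < Suc n" "grid a x n ! i \<in> {l j<..<r j}" using elim by auto
      then show "\<exists>i<length (grid a x n). crossings_below w (grid a x n ! i) = j
          \<and> (\<forall>k. 1 \<le> k \<and> k \<le> N w \<longrightarrow> crossing k w \<noteq> grid a x n ! i)"
        using crossings_below_in_gap[OF w a(1) j, of "grid a x n ! i"] by (auto simp: l_def r_def)
    qed
  qed
qed

text \<open>The factor \<open>indicator W\<close> discards the null set of levels where \<open>N\<close> and \<open>\<gamma>\<close> carry no
  information.\<close>
definition crossing_number :: "real \<Rightarrow> real \<Rightarrow> ennreal" where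
  "crossing_number x w = indicator W w * of_nat (crossings_below w x)"

lemma crossing_number_eq_SUP_grid:
  assumes "a < -R" "a < x"
  shows "crossing_number x w = (SUP n. indicator W w * of_nat (level_changes u (grid a x n) w))"
proof (cases "w \<in> W")
  case w: True
  have "level_changes u (grid a x n) w \<le> crossings_below w x" for n
    using assms(2) by (intro level_changes_le_crossings_below[OF w sorted_grid set_grid_subset])
  moreover obtain n0 where "crossings_below w x \<le> level_changes u (grid a x n0) w"
    using eventually_crossings_below_le_level_changes_grid[OF w assms] eventually_sequentially by auto
  ultimately have "(of_nat (crossings_below w x) :: ennreal) = (SUP n. of_nat (level_changes u (grid a x n) w))"
    by (intro antisym SUP_upper2[of n0] SUP_least) auto
  then show ?thesis using w by (simp add: crossing_number_def)
qed (simp add: crossing_number_def)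

lemma borel_measurable_crossing_number: "crossing_number x \<in> borel_measurable lebesgue"
proof -
  define a where "a = min (-R - 1) (x - 1)"
  have "(\<lambda>w. SUP n. indicator W w * (of_nat (level_changes u (grid a x n) w) :: ennreal)) \<in> borel_measurable lebesgue"
    using sets_W borel_measurable_level_changes by measurable
  moreover have "crossing_number x = (\<lambda>w. SUP n. indicator W w * of_nat (level_changes u (grid a x n) w))"
    using crossing_number_eq_SUP_grid[of a x] by (auto simp: a_def)
  ultimately show ?thesis by simp
qed

lemma pvar_lessThan_le_nn_integral_crossing_number:
  "pvar u {..<x} \<le> (\<integral>\<^sup>+ w. crossing_number x w \<partial>lebesgue)"
  unfolding pvar_eq_SUP_list_var
proof (rule SUP_least)
  fix xs assume xs: "xs \<in> {xs. sorted_wrt (<) xs \<and> set xs \<subseteq> {..<x}}"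
  have "AE w in lebesgue. of_nat (level_changes u xs w) \<le> crossing_number x w"
  proof (rule AE_I'[OF W_full], rule subsetI)
    fix w assume w: "w \<in> {w \<in> space lebesgue. \<not> of_nat (level_changes u xs w) \<le> crossing_number x w}"
    then have "w \<notin> W"
      using level_changes_le_crossings_below[of w xs x] xs by (auto simp: crossing_number_def)
    moreover have "w \<in> {0..M}"
    proof (rule ccontr)
      assume "w \<notin> {0..M}"
      then have "level_changes u xs w = 0"
        by (rule level_changes_eq_0_outside_range[OF range[rule_format]])
      then show False using w by simp
    qed
    ultimately show "w \<in> {0..M} - W" by simp
  qed
  then have "(\<integral>\<^sup>+ w. of_nat (level_changes u xs w) \<partial>lebesgue) \<le> (\<integral>\<^sup>+ w. crossing_number x w \<partial>lebesgue)"
    by (rule nn_integral_mono_AE)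
  then show "ennreal (list_var u xs) \<le> (\<integral>\<^sup>+ w. crossing_number x w \<partial>lebesgue)"
    by (simp add: nn_integral_level_changes)
qed

lemma nn_integral_crossing_number_le_pvar_lessThan:
  "(\<integral>\<^sup>+ w. crossing_number x w \<partial>lebesgue) \<le> pvar u {..<x}"
proof -
  define a where "a = min (-R - 1) (x - 1)"
  have a: "a < -R" "a < x" by (auto simp: a_def)
  define f where "f n w = indicator W w * (of_nat (level_changes u (grid a x n) w) :: ennreal)" for n w
  have f_measurable: "f n \<in> borel_measurable lebesgue" for n
    unfolding f_def using sets_W borel_measurable_level_changes by measurable
  have "crossing_number x w \<le> liminf (\<lambda>n. f n w)" for w
  proof (cases "w \<in> W")
    case w: True
    show ?thesis
      using eventually_crossings_below_le_level_changes_grid[OF w a]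
      by (intro Liminf_bounded) (simp add: f_def crossing_number_def w)
  qed (simp add: crossing_number_def)
  then have "(\<integral>\<^sup>+ w. crossing_number x w \<partial>lebesgue) \<le> (\<integral>\<^sup>+ w. liminf (\<lambda>n. f n w) \<partial>lebesgue)"
    by (intro nn_integral_mono)
  also have "\<dots> \<le> liminf (\<lambda>n. integral\<^sup>N lebesgue (f n))"
    by (rule nn_integral_liminf[OF f_measurable])
  also have "\<dots> \<le> limsup (\<lambda>n. integral\<^sup>N lebesgue (f n))"
    by (rule Liminf_le_Limsup) simp
  also have "\<dots> \<le> pvar u {..<x}"
  proof (rule Limsup_bounded[OF always_eventually], rule allI)
    fix n
    have "integral\<^sup>N lebesgue (f n) \<le> (\<integral>\<^sup>+ w. of_nat (level_changes u (grid a x n) w) \<partial>lebesgue)"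
      unfolding f_def by (intro nn_integral_mono) (auto simp: indicator_def)
    also have "\<dots> \<le> pvar u {..<x}"
      unfolding nn_integral_level_changes using a by (intro list_var_le_pvar sorted_grid set_grid_subset)
    finally show "integral\<^sup>N lebesgue (f n) \<le> pvar u {..<x}" .
  qed
  finally show ?thesis .
qed

theorem nn_integral_crossing_number: "(\<integral>\<^sup>+ w. crossing_number x w \<partial>lebesgue) = ennreal (var_below x)"
  unfolding pvar_lessThan_eq[symmetric]
  by (rule antisym[OF nn_integral_crossing_number_le_pvar_lessThan pvar_lessThan_le_nn_integral_crossing_number])

lemma crossing_number_mono: "x \<le> y \<Longrightarrow> crossing_number x w \<le> crossing_number y w"
  unfolding crossing_number_def using crossings_below_mono[of x y w] by (simp add: indicator_def)

lemma crossings_below_left: "w \<in> W \<Longrightarrow> x \<le> -R \<Longrightarrow> crossings_below w x = 0"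
proof -
  assume "w \<in> W" "x \<le> -R"
  then have "{j \<in> {1..N w}. crossing j w < x} = {}"
    using crossing_bounds by force
  then show ?thesis by (simp add: crossings_below_def)
qed

lemma crossings_below_right: "w \<in> W \<Longrightarrow> R < x \<Longrightarrow> crossings_below w x = N w"
proof -
  assume "w \<in> W" "R < x"
  then have "{j \<in> {1..N w}. crossing j w < x} = {1..N w}"
    using crossing_bounds by force
  then show ?thesis by (simp add: crossings_below_def)
qed

lemma crossing_number_left: "x \<le> -R \<Longrightarrow> crossing_number x w = 0"
  by (cases "w \<in> W") (simp_all add: crossing_number_def crossings_below_left)

lemma crossing_number_right: "R < x \<Longrightarrow> crossing_number x w = indicator W w * of_nat (N w)"
  by (cases "w \<in> W") (simp_all add: crossing_number_def crossings_below_right)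

lemma var_below_left: "x \<le> -R \<Longrightarrow> var_below x = 0"
  using nn_integral_crossing_number[of x] var_below_nonneg[of x] by (simp add: crossing_number_left)

lemma nn_integral_N_eq_TV: "(\<integral>\<^sup>+ w. indicator W w * of_nat (N w) \<partial>lebesgue) = ennreal (TV u)"
proof -
  have N: "(\<integral>\<^sup>+ w. indicator W w * of_nat (N w) \<partial>lebesgue) = pvar u {..<x}" if "R < x" for x
    using nn_integral_crossing_number[of x] that by (simp add: crossing_number_right pvar_lessThan_eq)
  have "pvar u {..<x} \<le> (\<integral>\<^sup>+ w. indicator W w * of_nat (N w) \<partial>lebesgue)" for x
    using pvar_mono[of "{..<x}" "{..<max x (R + 1)}" u] N[of "max x (R + 1)"] by auto
  then have "(SUP x. pvar u {..<x}) = (\<integral>\<^sup>+ w. indicator W w * of_nat (N w) \<partial>lebesgue)"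
    using N[of "R + 1"] by (intro antisym SUP_least SUP_upper2[of "R + 1"]) auto
  then show ?thesis by (simp add: pvar_UNIV_eq_SUP_lessThan[symmetric] pvar_UNIV_eq)
qed

lemma var_below_right: "R < x \<Longrightarrow> var_below x = TV u"
  using nn_integral_crossing_number[of x] nn_integral_N_eq_TV var_below_nonneg[of x] TV_nonneg
  by (simp add: crossing_number_right)

section \<open>Distribution of the map s\<close>

definition D_slice :: "nat \<Rightarrow> real set" where
  "D_slice j = {w \<in> W. 1 \<le> j \<and> j \<le> N w}"

lemma mem_Dset_iff: "(j, w) \<in> Dset W N \<longleftrightarrow> w \<in> D_slice j"
  by (simp add: Dset_def D_slice_def)

lemma sets_crossings_below_ge: "{w \<in> W. j \<le> crossings_below w y} \<in> sets lebesgue"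
proof -
  have "{w \<in> W. j \<le> crossings_below w y} = W \<inter> {w \<in> space lebesgue. of_nat j \<le> crossing_number y w}"
    by (auto simp: crossing_number_def)
  also have "\<dots> \<in> sets lebesgue"
    using sets_W borel_measurable_crossing_number[of y] by measurable
  finally show ?thesis .
qed

lemma sets_D_slice: "D_slice j \<in> sets lebesgue"
proof -
  have "D_slice j = (if 1 \<le> j then {w \<in> W. j \<le> crossings_below w (R + 1)} else {})"
    using crossings_below_right[of _ "R + 1"] by (auto simp: D_slice_def)
  then show ?thesis using sets_crossings_below_ge by simp
qed

lemma borel_measurable_crossing_on_D_slice:
  "(\<lambda>w. if w \<in> D_slice j then crossing j w else 0) \<in> borel_measurable lebesgue"
  unfolding borel_measurable_iff_less
proof
  fix y
  have "{w \<in> space lebesgue. (if w \<in> D_slice j then crossing j w else 0) < y} =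
      (D_slice j \<inter> {w \<in> W. j \<le> crossings_below w y}) \<union> (if 0 < y then - D_slice j else {})"
    using crossing_less_iff_le_crossings_below by (auto simp: D_slice_def)
  also have "\<dots> \<in> sets lebesgue"
    by (simp add: sets.Int sets.Un sets_D_slice sets_crossings_below_ge Compl_in_sets_lebesgue)
  finally show "{w \<in> space lebesgue. (if w \<in> D_slice j then crossing j w else 0) < y} \<in> sets lebesgue" .
qed

lemma sfun_eq: "sfun u \<gamma> j w = var_below (crossing j w) + \<bar>w - left_lim u (crossing j w)\<bar>"
  by (simp add: sfun_def var_below_def crossing_def)

lemma sets_sfun_preimage_slice:
  assumes "B \<in> sets borel"
  shows "{w. (j, w) \<in> Dset W N \<and> sfun u \<gamma> j w \<in> B} \<in> sets lebesgue"
proof -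
  define c where "c w = (if w \<in> D_slice j then crossing j w else 0)" for w
  have c: "c \<in> borel_measurable lebesgue"
    unfolding c_def by (rule borel_measurable_crossing_on_D_slice)
  have "(\<lambda>w. var_below (c w)) \<in> borel_measurable lebesgue"
    by (rule measurable_compose[OF c borel_measurable_mono[OF mono_var_below]])
  moreover have "(\<lambda>w. left_lim u (c w)) \<in> borel_measurable lebesgue"
    by (rule measurable_compose[OF c borel_measurable_left_lim])
  moreover have "(\<lambda>w. w) \<in> borel_measurable lebesgue"
    by (rule measurable_completion) simp
  ultimately have "(\<lambda>w. var_below (c w) + \<bar>w - left_lim u (c w)\<bar>) \<in> borel_measurable lebesgue"
    by (intro borel_measurable_add borel_measurable_abs borel_measurable_diff)
  from measurable_sets[OF this assms] sets_D_slice
  have "D_slice j \<inter> ((\<lambda>w. var_below (c w) + \<bar>w - left_lim u (c w)\<bar>) -` B \<inter> space lebesgue) \<in> sets lebesgue"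
    by auto
  also have "D_slice j \<inter> ((\<lambda>w. var_below (c w) + \<bar>w - left_lim u (c w)\<bar>) -` B \<inter> space lebesgue) =
      {w. (j, w) \<in> Dset W N \<and> sfun u \<gamma> j w \<in> B}"
    by (auto simp: mem_Dset_iff sfun_eq c_def)
  finally show ?thesis .
qed

lemma sfun_bounds:
  assumes "w \<in> W" "1 \<le> j" "j \<le> N w"
  shows "var_below (crossing j w) \<le> sfun u \<gamma> j w" "sfun u \<gamma> j w \<le> var_upto (crossing j w)"
proof -
  show "var_below (crossing j w) \<le> sfun u \<gamma> j w" by (simp add: sfun_eq)
  have "\<bar>w - left_lim u (crossing j w)\<bar> \<le> \<bar>u (crossing j w) - left_lim u (crossing j w)\<bar>"
    using crossing_between_limits[OF assms] by auto
  then show "sfun u \<gamma> j w \<le> var_upto (crossing j w)"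
    using var_below_add_left_jump[of "crossing j w"] by (simp add: sfun_eq)
qed

definition levels_crossing_at :: "real \<Rightarrow> real set" where
  "levels_crossing_at x = {w \<in> W. \<exists>j. 1 \<le> j \<and> j \<le> N w \<and> crossing j w = x}"

lemma crossings_upto_eq:
  assumes w: "w \<in> W"
  shows "crossings_upto w x = crossings_below w x + (if w \<in> levels_crossing_at x then 1 else 0)"
proof -
  have "{j \<in> {1..N w}. crossing j w \<le> x} =
      {j \<in> {1..N w}. crossing j w < x} \<union> {j \<in> {1..N w}. crossing j w = x}" by auto
  moreover have "card ({j \<in> {1..N w}. crossing j w < x} \<union> {j \<in> {1..N w}. crossing j w = x}) =
      card {j \<in> {1..N w}. crossing j w < x} + card {j \<in> {1..N w}. crossing j w = x}"
    by (rule card_Un_disjoint) auto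
  moreover have "card {j \<in> {1..N w}. crossing j w = x} = (if w \<in> levels_crossing_at x then 1 else 0)"
  proof (cases "w \<in> levels_crossing_at x")
    case True
    then obtain j0 where j0: "1 \<le> j0" "j0 \<le> N w" "crossing j0 w = x"
      by (auto simp: levels_crossing_at_def)
    then have "{j \<in> {1..N w}. crossing j w = x} = {j0}"
      using crossing_eq_iff[OF w _ _ j0(1,2)] by auto
    then show ?thesis using True by simp
  qed (use w in \<open>auto simp: levels_crossing_at_def\<close>)
  ultimately show ?thesis
    unfolding crossings_upto_def crossings_below_def by simp
qed

lemma INF_crossings_below_right:
  assumes w: "w \<in> W"
  shows "(INF n. of_nat (crossings_below w (x + inverse (real (Suc n)))) :: ennreal) = of_nat (crossings_upto w x)"
proof (rule antisym)
  have lim: "(\<lambda>n. x + inverse (real (Suc n))) \<longlonglongrightarrow> x"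
    using tendsto_add[OF tendsto_const LIMSEQ_inverse_real_of_nat, of x] by simp
  have "\<forall>j\<in>{1..N w}. eventually (\<lambda>n. crossing j w \<le> x \<or> x + inverse (real (Suc n)) < crossing j w) sequentially"
  proof
    fix j
    show "eventually (\<lambda>n. crossing j w \<le> x \<or> x + inverse (real (Suc n)) < crossing j w) sequentially"
    proof (cases "crossing j w \<le> x")
      case False
      then have "eventually (\<lambda>n. x + inverse (real (Suc n)) < crossing j w) sequentially"
        by (intro order_tendstoD(2)[OF lim]) simp
      then show ?thesis by (rule eventually_mono) simp
    qed simp
  qed
  then have "eventually (\<lambda>n. \<forall>j\<in>{1..N w}. crossing j w \<le> x \<or> x + inverse (real (Suc n)) < crossing j w) sequentially"
    by (rule eventually_ball_finite[rotated]) simp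
  then obtain n0 where n0: "\<forall>j\<in>{1..N w}. crossing j w \<le> x \<or> x + inverse (real (Suc n0)) < crossing j w"
    by (auto simp: eventually_sequentially)
  have "crossings_below w (x + inverse (real (Suc n0))) \<le> crossings_upto w x"
    unfolding crossings_below_def crossings_upto_def by (rule card_mono) (use n0 in auto)
  then show "(INF n. of_nat (crossings_below w (x + inverse (real (Suc n)))) :: ennreal) \<le> of_nat (crossings_upto w x)"
    by (intro INF_lower2[of n0]) auto
  show "of_nat (crossings_upto w x) \<le> (INF n. of_nat (crossings_below w (x + inverse (real (Suc n)))) :: ennreal)"
    by (intro INF_greatest) (simp add: crossings_upto_le_crossings_below)
qed

lemma INF_crossing_number_right:
  "(INF n. crossing_number (x + inverse (real (Suc n))) w) = crossing_number x w + indicator (levels_crossing_at x) w"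
proof (cases "w \<in> W")
  case True
  then show ?thesis
    using INF_crossings_below_right[OF True, of x] crossings_upto_eq[OF True, of x]
    by (simp add: crossing_number_def indicator_def)
qed (simp add: crossing_number_def levels_crossing_at_def)

lemma sets_levels_crossing_at: "levels_crossing_at x \<in> sets lebesgue"
proof -
  let ?f = "\<lambda>w. INF n. crossing_number (x + inverse (real (Suc n))) w"
  have "levels_crossing_at x = {w \<in> space lebesgue. crossing_number x w < ?f w}"
  proof (intro set_eqI iffI)
    fix w assume w: "w \<in> levels_crossing_at x"
    then have "w \<in> W" by (simp add: levels_crossing_at_def)
    then show "w \<in> {w \<in> space lebesgue. crossing_number x w < ?f w}"
      using w unfolding INF_crossing_number_right by (simp add: crossing_number_def of_nat_less_top)
  next
    fix w assume "w \<in> {w \<in> space lebesgue. crossing_number x w < ?f w}"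
    then have "crossing_number x w < crossing_number x w + indicator (levels_crossing_at x) w"
      unfolding INF_crossing_number_right by simp
    then show "w \<in> levels_crossing_at x" by (cases "w \<in> levels_crossing_at x") auto
  qed
  also have "\<dots> \<in> sets lebesgue"
    using borel_measurable_crossing_number by measurable
  finally show ?thesis .
qed

lemma levels_crossing_at_subset:
  "levels_crossing_at x \<subseteq> {min (left_lim u x) (u x)..max (left_lim u x) (u x)}"
  using crossing_between_limits by (auto simp: levels_crossing_at_def)

lemma emeasure_levels_crossing_at_le: "emeasure lebesgue (levels_crossing_at x) \<le> ennreal \<bar>u x - left_lim u x\<bar>"
proof -
  have "emeasure lebesgue (levels_crossing_at x) \<le>
      emeasure lebesgue {min (left_lim u x) (u x)..max (left_lim u x) (u x)}"
    by (intro emeasure_mono levels_crossing_at_subset) simp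
  then show ?thesis by (simp add: min_def max_def split: if_splits)
qed

lemma var_below_right_limit_le:
  assumes gt: "\<And>y. x < y \<Longrightarrow> t < var_below y"
  shows "t \<le> var_below x + \<bar>u x - left_lim u x\<bar>"
proof -
  define f where "f n = crossing_number (x + inverse (real (Suc n)))" for n
  have "decseq f"
    unfolding f_def
    by (intro decseq_SucI le_funI crossing_number_mono) (simp add: inverse_le_iff_le)
  moreover have "f n \<in> borel_measurable lebesgue" for n
    unfolding f_def by (rule borel_measurable_crossing_number)
  moreover have "(\<integral>\<^sup>+ w. f n w \<partial>lebesgue) < \<infinity>" for n
    unfolding f_def nn_integral_crossing_number by simp
  ultimately have "(INF n. integral\<^sup>N lebesgue (f n)) = (\<integral>\<^sup>+ w. (INF n. f n w) \<partial>lebesgue)"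
    by (rule nn_integral_monotone_convergence_INF_decseq[symmetric])
  moreover have "ennreal t \<le> integral\<^sup>N lebesgue (f n)" for n
    unfolding f_def nn_integral_crossing_number using gt[of "x + inverse (real (Suc n))"]
    by (simp add: ennreal_leI)
  ultimately have "ennreal t \<le> (\<integral>\<^sup>+ w. (INF n. f n w) \<partial>lebesgue)"
    by (metis INF_greatest)
  also have "\<dots> = (\<integral>\<^sup>+ w. crossing_number x w + indicator (levels_crossing_at x) w \<partial>lebesgue)"
    by (simp only: f_def INF_crossing_number_right)
  also have "\<dots> = ennreal (var_below x) + emeasure lebesgue (levels_crossing_at x)"
    by (subst nn_integral_add)
      (auto intro!: borel_measurable_indicator
        simp: nn_integral_crossing_number borel_measurable_crossing_number sets_levels_crossing_at)
  also have "\<dots> \<le> ennreal (var_below x) + ennreal \<bar>u x - left_lim u x\<bar>"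
    by (intro add_left_mono emeasure_levels_crossing_at_le)
  finally show ?thesis
    using var_below_nonneg[of x] by (simp flip: ennreal_plus add: ennreal_le_iff)
qed

lemma left_lim_bounds: "0 \<le> left_lim u x \<and> left_lim u x \<le> M"
  using range by (auto intro: tendsto_lowerbound[OF tendsto_left_lim] tendsto_upperbound[OF tendsto_left_lim])

lemma var_below_threshold:
  assumes "0 \<le> t" "t < TV u"
  obtains x where "var_below x \<le> t" "\<And>y. x < y \<Longrightarrow> t < var_below y"
proof -
  define X where "X = {x. var_below x \<le> t}"
  have "-R - 1 \<in> X" using var_below_left[of "-R - 1"] assms by (simp add: X_def)
  have "x \<le> R" if "x \<in> X" for x
    using that var_below_right[of x] assms by (force simp: X_def)
  then have bdd: "bdd_above X" by (intro bdd_aboveI[of _ R]) blast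
  have "pvar u {..<Sup X} \<le> ennreal t"
    unfolding pvar_lessThan_eq_SUP_atMost
  proof (rule SUP_least)
    fix z assume "z \<in> {..<Sup X}"
    then obtain x where "x \<in> X" "z < x" using less_cSup_iff[OF _ bdd] \<open>-R - 1 \<in> X\<close> by auto
    then have "var_upto z \<le> t" using var_upto_le_var_below[of z x] by (simp add: X_def)
    then show "pvar u {..z} \<le> ennreal t" by (simp add: pvar_atMost_eq ennreal_leI)
  qed
  then have "var_below (Sup X) \<le> t" using assms(1) by (simp add: pvar_lessThan_eq ennreal_le_iff)
  moreover have "t < var_below y" if "Sup X < y" for y
    using cSup_upper[OF _ bdd, of y] that by (force simp: X_def)
  ultimately show ?thesis by (rule that)
qed

text \<open>Almost every level between \<open>u(x-)\<close> and \<open>u(x)\<close> has a crossing point at \<open>x\<close>.\<close>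
lemma emeasure_levels_crossing_at_near_left_lim:
  assumes d: "0 \<le> d" "d \<le> \<bar>u x - left_lim u x\<bar>"
  shows "emeasure lebesgue (levels_crossing_at x \<inter> {left_lim u x - d..left_lim u x + d}) = ennreal d"
proof -
  let ?a = "left_lim u x" and ?b = "u x"
  let ?E = "levels_crossing_at x \<inter> {?a - d..?a + d}"
  let ?I = "if ?a \<le> ?b then {?a..?a + d} else {?a - d..?a}"
  have up: "?E \<subseteq> ?I"
    using levels_crossing_at_subset[of x] by (auto simp: min_def max_def split: if_splits)
  have lo: "interior ?I - ({0..M} - W) \<subseteq> ?E"
  proof
    fix w assume w: "w \<in> interior ?I - ({0..M} - W)"
    then have "w \<in> W"
      using left_lim_bounds[of x] range[rule_format, of x] d by (auto split: if_splits)
    moreover have "min ?a ?b < w" "w < max ?a ?b" using w d by (auto split: if_splits)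
    ultimately obtain j where "1 \<le> j" "j \<le> N w" "crossing j w = x"
      by (rule crossing_if_strictly_between_limits)
    then show "w \<in> ?E" using w \<open>w \<in> W\<close> by (auto simp: levels_crossing_at_def split: if_splits)
  qed
  have "emeasure lebesgue (interior ?I - ({0..M} - W)) \<le> emeasure lebesgue ?E"
    by (rule emeasure_mono[OF lo]) (use sets_levels_crossing_at in auto)
  moreover have "emeasure lebesgue ?E \<le> emeasure lebesgue ?I"
    by (rule emeasure_mono[OF up]) simp
  moreover have "emeasure lebesgue (interior ?I - ({0..M} - W)) = ennreal d"
    using emeasure_Diff_null_set[OF W_full, of "interior ?I"] d by simp
  moreover have "emeasure lebesgue ?I = ennreal d" using d by simp
  ultimately show ?thesis by (metis antisym)
qed

definition preimage_slice :: "real set \<Rightarrow> nat \<Rightarrow> real set" where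
  "preimage_slice B j = {w. (j, w) \<in> Dset W N \<and> sfun u \<gamma> j w \<in> B}"

lemma sets_preimage_slice: "B \<in> sets borel \<Longrightarrow> preimage_slice B j \<in> sets lebesgue"
  unfolding preimage_slice_def by (rule sets_sfun_preimage_slice)

lemma sum_emeasure_preimage_slice_eq_nn_integral:
  "B \<in> sets borel \<Longrightarrow>
    (\<Sum>j. emeasure lebesgue (preimage_slice B j)) = (\<integral>\<^sup>+ w. of_nat (card {j. w \<in> preimage_slice B j}) \<partial>lebesgue)"
proof (rule suminf_emeasure_eq_nn_integral_card)
  show "finite {j. w \<in> preimage_slice B j}" for w
    by (rule finite_subset[of _ "{1..N w}"]) (auto simp: preimage_slice_def Dset_def)
qed (rule sets_preimage_slice)

lemma sfun_le_TV: "(j, w) \<in> Dset W N \<Longrightarrow> sfun u \<gamma> j w \<le> TV u"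
  using sfun_bounds(2)[of w j] var_upto_le_TV[of "crossing j w"] by (auto simp: Dset_def)

lemma sfun_nonneg: "0 \<le> sfun u \<gamma> j w"
  using var_below_nonneg by (simp add: sfun_eq)

lemma sum_emeasure_preimage_slice_UNIV: "(\<Sum>j. emeasure lebesgue (preimage_slice UNIV j)) = ennreal (TV u)"
proof -
  have "(of_nat (card {j. w \<in> preimage_slice UNIV j}) :: ennreal) = indicator W w * of_nat (N w)" for w
  proof -
    have "{j. w \<in> preimage_slice UNIV j} = (if w \<in> W then {1..N w} else {})"
      by (auto simp: preimage_slice_def Dset_def)
    then show ?thesis by simp
  qed
  then show ?thesis
    by (simp add: sum_emeasure_preimage_slice_eq_nn_integral nn_integral_N_eq_TV[symmetric])
qed

lemma sfun_le_iff_threshold: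
  assumes x: "var_below x \<le> t" "\<And>y. x < y \<Longrightarrow> t < var_below y"
    and w: "w \<in> W" "1 \<le> j" "j \<le> N w"
  shows "sfun u \<gamma> j w \<le> t \<longleftrightarrow>
    crossing j w < x \<or> (crossing j w = x \<and> \<bar>w - left_lim u x\<bar> \<le> t - var_below x)"
proof (cases "crossing j w" x rule: linorder_cases)
  case less
  then have "sfun u \<gamma> j w \<le> var_below x"
    using sfun_bounds(2)[OF w] var_upto_le_var_below[OF less] by linarith
  then show ?thesis using less x(1) by simp
next
  case greater
  then show ?thesis using sfun_bounds(1)[OF w] x(2)[OF greater] by simp
qed (simp add: sfun_eq, linarith)

lemma card_preimage_slice_atMost:
  assumes x: "var_below x \<le> t" "\<And>y. x < y \<Longrightarrow> t < var_below y"
  shows "(of_nat (card {j. w \<in> preimage_slice {..t} j}) :: ennreal) = crossing_number x w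
    + indicator (levels_crossing_at x \<inter> {left_lim u x - (t - var_below x)..left_lim u x + (t - var_below x)}) w"
proof -
  define d where "d = t - var_below x"
  define E where "E = levels_crossing_at x \<inter> {left_lim u x - d..left_lim u x + d}"
  have "(of_nat (card {j. w \<in> preimage_slice {..t} j}) :: ennreal) = crossing_number x w + indicator E w"
  proof (cases "w \<in> W")
    case w: True
    have "{j. w \<in> preimage_slice {..t} j} =
        {j \<in> {1..N w}. crossing j w < x} \<union> {j \<in> {1..N w}. crossing j w = x \<and> \<bar>w - left_lim u x\<bar> \<le> d}"
      using sfun_le_iff_threshold[OF x w] w by (auto simp: preimage_slice_def Dset_def d_def)
    moreover have "card {j \<in> {1..N w}. crossing j w = x \<and> \<bar>w - left_lim u x\<bar> \<le> d} = (if w \<in> E then 1 else 0)"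
    proof (cases "w \<in> E")
      case True
      then obtain j0 where j0: "1 \<le> j0" "j0 \<le> N w" "crossing j0 w = x" "\<bar>w - left_lim u x\<bar> \<le> d"
        by (auto simp: E_def levels_crossing_at_def abs_le_iff)
      then have "{j \<in> {1..N w}. crossing j w = x \<and> \<bar>w - left_lim u x\<bar> \<le> d} = {j0}"
        using crossing_eq_iff[OF w(1) _ _ j0(1,2)] by auto
      then show ?thesis using True by simp
    qed (use w in \<open>auto simp: E_def levels_crossing_at_def abs_le_iff\<close>)
    ultimately show ?thesis
      using w by (simp add: card_Un_disjoint disjoint_iff crossing_number_def crossings_below_def indicator_def)
  next
    case False
    then show ?thesis
      by (simp add: preimage_slice_def Dset_def crossing_number_def E_def levels_crossing_at_def)
  qed
  then show ?thesis by (simp add: E_def d_def)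
qed

lemma sum_emeasure_preimage_slice_atMost_below_TV:
  assumes t: "0 \<le> t" "t < TV u"
  shows "(\<Sum>j. emeasure lebesgue (preimage_slice {..t} j)) = ennreal t"
proof -
  obtain x where x: "var_below x \<le> t" "\<And>y. x < y \<Longrightarrow> t < var_below y"
    using var_below_threshold[OF t] by blast
  define d where "d = t - var_below x"
  have d: "0 \<le> d" "d \<le> \<bar>u x - left_lim u x\<bar>"
    using x var_below_right_limit_le[of x t] by (auto simp: d_def)
  define E where "E = levels_crossing_at x \<inter> {left_lim u x - d..left_lim u x + d}"
  have "E \<in> sets lebesgue"
    unfolding E_def by (intro sets.Int sets_levels_crossing_at) simp
  have "(\<Sum>j. emeasure lebesgue (preimage_slice {..t} j)) =
      (\<integral>\<^sup>+ w. crossing_number x w + indicator E w \<partial>lebesgue)"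
    by (simp add: sum_emeasure_preimage_slice_eq_nn_integral card_preimage_slice_atMost[OF x] E_def d_def)
  also have "\<dots> = ennreal (var_below x) + emeasure lebesgue E"
    using \<open>E \<in> sets lebesgue\<close>
    by (subst nn_integral_add)
      (auto intro!: borel_measurable_indicator simp: nn_integral_crossing_number borel_measurable_crossing_number)
  also have "\<dots> = ennreal t"
    using emeasure_levels_crossing_at_near_left_lim[OF d] var_below_nonneg d
    by (simp add: E_def d_def flip: ennreal_plus)
  finally show ?thesis .
qed

lemma sum_emeasure_preimage_slice_atMost:
  "(\<Sum>j. emeasure lebesgue (preimage_slice {..t} j)) = emeasure lebesgue ({..t} \<inter> {0<..TV u})"
proof -
  consider "t < 0" | "TV u \<le> t" | "0 \<le> t" "t < TV u" by linarith
  then show ?thesis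
  proof cases
    case 1
    then have "sfun u \<gamma> j w \<notin> {..t}" for j w
      using sfun_nonneg[of j w] by simp
    then have "preimage_slice {..t} j = {}" for j
      by (auto simp: preimage_slice_def)
    moreover have "{..t} \<inter> {0<..TV u} = {}" using 1 by auto
    ultimately show ?thesis by simp
  next
    case 2
    then have "preimage_slice {..t} j = preimage_slice UNIV j" for j
      using sfun_le_TV[of j] by (auto simp: preimage_slice_def intro: order_trans)
    moreover have "{..t} \<inter> {0<..TV u} = {0<..TV u}" using 2 by auto
    ultimately show ?thesis using sum_emeasure_preimage_slice_UNIV TV_nonneg by simp
  next
    case 3
    then have "{..t} \<inter> {0<..TV u} = {0<..t}" by auto
    then show ?thesis using sum_emeasure_preimage_slice_atMost_below_TV[OF 3] 3 by simp
  qed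
qed

lemma sum_emeasure_preimage_slice_Compl:
  assumes A: "A \<in> sets borel"
    and IH: "(\<Sum>j. emeasure lebesgue (preimage_slice A j)) = emeasure lebesgue (A \<inter> {0<..TV u})"
  shows "(\<Sum>j. emeasure lebesgue (preimage_slice (- A) j)) = emeasure lebesgue (- A \<inter> {0<..TV u})"
proof -
  let ?J = "{0<..TV u}"
  have "emeasure lebesgue (preimage_slice (- A) j) + emeasure lebesgue (preimage_slice A j) =
      emeasure lebesgue (preimage_slice UNIV j)" for j
  proof -
    have "preimage_slice (- A) j \<union> preimage_slice A j = preimage_slice UNIV j"
      "preimage_slice (- A) j \<inter> preimage_slice A j = {}"
      by (auto simp: preimage_slice_def)
    then show ?thesis
      using plus_emeasure[OF sets_preimage_slice sets_preimage_slice] A by simp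
  qed
  then have "(\<Sum>j. emeasure lebesgue (preimage_slice (- A) j)) + emeasure lebesgue (A \<inter> ?J) =
      (\<Sum>j. emeasure lebesgue (preimage_slice UNIV j))"
    unfolding IH[symmetric] by (subst suminf_add) auto
  also have "\<dots> = emeasure lebesgue ?J"
    using sum_emeasure_preimage_slice_UNIV TV_nonneg by simp
  also have "\<dots> = emeasure lebesgue (- A \<inter> ?J) + emeasure lebesgue (A \<inter> ?J)"
  proof -
    have "?J = (- A \<inter> ?J) \<union> (A \<inter> ?J)" by auto
    then show ?thesis using A by (subst plus_emeasure) auto
  qed
  finally have sum: "(\<Sum>j. emeasure lebesgue (preimage_slice (- A) j)) + emeasure lebesgue (A \<inter> ?J) =
      emeasure lebesgue (- A \<inter> ?J) + emeasure lebesgue (A \<inter> ?J)" .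
  have "emeasure lebesgue (A \<inter> ?J) \<le> emeasure lebesgue ?J"
    by (rule emeasure_mono) auto
  then have "emeasure lebesgue (A \<inter> ?J) \<noteq> \<infinity>" using TV_nonneg by (auto simp: top_unique)
  with sum show ?thesis by (simp add: ennreal_add_left_cancel add.commute[of _ "emeasure lebesgue (A \<inter> ?J)"])
qed

lemma sum_emeasure_preimage_slice_UN:
  fixes f :: "nat \<Rightarrow> real set"
  assumes f: "disjoint_family f" "\<And>i. f i \<in> sets borel"
    and IH: "\<And>i. (\<Sum>j. emeasure lebesgue (preimage_slice (f i) j)) = emeasure lebesgue (f i \<inter> {0<..TV u})"
  shows "(\<Sum>j. emeasure lebesgue (preimage_slice (\<Union>i. f i) j)) = emeasure lebesgue ((\<Union>i. f i) \<inter> {0<..TV u})"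
proof -
  have "emeasure lebesgue (preimage_slice (\<Union>i. f i) j) = (\<Sum>i. emeasure lebesgue (preimage_slice (f i) j))" for j
  proof -
    have "preimage_slice (\<Union>i. f i) j = (\<Union>i. preimage_slice (f i) j)"
      by (auto simp: preimage_slice_def)
    moreover have "disjoint_family (\<lambda>i. preimage_slice (f i) j)"
      using f(1) by (auto simp: disjoint_family_on_def preimage_slice_def)
    moreover have "range (\<lambda>i. preimage_slice (f i) j) \<subseteq> sets lebesgue"
      using sets_preimage_slice f(2) by auto
    ultimately show ?thesis
      by (simp only:) (rule suminf_emeasure[symmetric])
  qed
  then have "(\<Sum>j. emeasure lebesgue (preimage_slice (\<Union>i. f i) j)) = (\<Sum>i. emeasure lebesgue (f i \<inter> {0<..TV u}))"
    by (simp add: suminf_commute_ennreal[of "\<lambda>j i. emeasure lebesgue (preimage_slice (f i) j)"] IH)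
  also have "\<dots> = emeasure lebesgue ((\<Union>i. f i) \<inter> {0<..TV u})"
  proof -
    have "disjoint_family (\<lambda>i. f i \<inter> {0<..TV u})"
      using f(1) by (auto simp: disjoint_family_on_def)
    moreover have "range (\<lambda>i. f i \<inter> {0<..TV u}) \<subseteq> sets lebesgue" using f(2) by auto
    moreover have "(\<Union>i. f i) \<inter> {0<..TV u} = (\<Union>i. f i \<inter> {0<..TV u})" by auto
    ultimately show ?thesis
      by (simp only:) (rule suminf_emeasure)
  qed
  finally show ?thesis .
qed

theorem sum_emeasure_preimage_slice:
  "B \<in> sets borel \<Longrightarrow> (\<Sum>j. emeasure lebesgue (preimage_slice B j)) = emeasure lebesgue (B \<inter> {0<..TV u})"
proof (induction rule: borel_set_induct_atMost)
  case empty
  then show ?case by (simp add: preimage_slice_def)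
next
  case (atMost a)
  then show ?case by (rule sum_emeasure_preimage_slice_atMost)
next
  case (compl A)
  then show ?case by (rule sum_emeasure_preimage_slice_Compl)
next
  case (union f)
  then show ?case by (rule sum_emeasure_preimage_slice_UN)
qed

lemma muD_sfun_preimage:
  assumes "B \<in> sets borel"
  shows "muD W N {(j, w). sfun u \<gamma> j w \<in> B} = emeasure lebesgue (B \<inter> {0<..TV u})"
proof -
  have "muD W N {(j, w). sfun u \<gamma> j w \<in> B} = (\<Sum>j. emeasure lebesgue (preimage_slice B j))"
    by (simp add: muD_def preimage_slice_def)
  also have "\<dots> = emeasure lebesgue (B \<inter> {0<..TV u})"
    by (rule sum_emeasure_preimage_slice[OF assms])
  finally show ?thesis .
qed

lemma muD_positive_measure_levels: "muD W N {(j, w). emeasure lebesgue {x. u x = w} \<noteq> 0} = 0"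
proof -
  let ?Z = "{w. emeasure lebesgue {x. u x = w} \<noteq> 0}"
  have "countable ?Z" by (rule countable_levels_of_positive_measure[OF borel_measurable_u])
  then have null: "emeasure lebesgue A = 0" if "A \<subseteq> ?Z" for A
    using null_sets_completionI[OF countable_imp_null_set_lborel[OF countable_subset[OF that]]] by auto
  have "emeasure lebesgue {w. (j, w) \<in> Dset W N \<and> (j, w) \<in> {(j, w). w \<in> ?Z}} = 0" for j
    by (rule null) auto
  then show ?thesis by (simp add: muD_def)
qed

section \<open>Injectivity of s\<close>

text \<open>Equal values of \<open>s\<close> at different crossing points force \<open>u \<equiv> w\<close> between them.\<close>
lemma sfun_eq_imp_positive_level:
  assumes d: "(j, w) \<in> Dset W N" "(j', w') \<in> Dset W N"
    and eq: "sfun u \<gamma> j w = sfun u \<gamma> j' w'" and less: "crossing j w < crossing j' w'"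
  shows "emeasure lebesgue {x. u x = w} \<noteq> 0"
proof -
  have w: "w \<in> W" "1 \<le> j" "j \<le> N w" and w': "w' \<in> W" "1 \<le> j'" "j' \<le> N w'"
    using d by (auto simp: Dset_def)
  let ?x = "crossing j w" and ?x' = "crossing j' w'"
  have s: "sfun u \<gamma> j w \<le> var_upto ?x" "var_below ?x' \<le> sfun u \<gamma> j' w'"
    using sfun_bounds(2)[OF w] sfun_bounds(1)[OF w'] .
  have gap: "var_upto ?x \<le> var_below ?x'" using less by (rule var_upto_le_var_below)
  have const: "u y = u ?x" if "?x < y" "y < ?x'" for y
    using var_upto_add_jump[OF that(1)] var_upto_le_var_below[OF that(2)] s gap eq by linarith
  have "var_below ?x + \<bar>u ?x - left_lim u ?x\<bar> \<le> var_below ?x + \<bar>w - left_lim u ?x\<bar>"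
    using var_below_add_left_jump[of ?x] s gap eq by (simp add: sfun_eq)
  then have "w = u ?x" using crossing_between_limits[OF w] by linarith
  then have "{?x..<?x'} \<subseteq> {x. u x = w}" using const by (force simp: order_le_less)
  then have "emeasure lebesgue {?x..<?x'} \<le> emeasure lebesgue {x. u x = w}"
    using borel_measurable_u by (intro emeasure_mono) auto
  then show ?thesis using less by auto
qed

lemma inj_on_sfun:
  "inj_on (\<lambda>(j, w). sfun u \<gamma> j w) (Dset W N - {(j, w). emeasure lebesgue {x. u x = w} \<noteq> 0})"
proof (rule inj_onI)
  fix p q
  assume "p \<in> Dset W N - {(j, w). emeasure lebesgue {x. u x = w} \<noteq> 0}"
    "q \<in> Dset W N - {(j, w). emeasure lebesgue {x. u x = w} \<noteq> 0}"
    "(\<lambda>(j, w). sfun u \<gamma> j w) p = (\<lambda>(j, w). sfun u \<gamma> j w) q"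
  moreover obtain j w j' w' where "p = (j, w)" "q = (j', w')" by fastforce
  ultimately have d: "(j, w) \<in> Dset W N" "(j', w') \<in> Dset W N"
    and null: "emeasure lebesgue {x. u x = w} = 0" "emeasure lebesgue {x. u x = w'} = 0"
    and eq: "sfun u \<gamma> j w = sfun u \<gamma> j' w'"
    by auto
  have w: "w \<in> W" "1 \<le> j" "j \<le> N w" and w': "w' \<in> W" "1 \<le> j'" "j' \<le> N w'"
    using d by (auto simp: Dset_def)
  consider "crossing j w < crossing j' w'" | "crossing j' w' < crossing j w" | "crossing j w = crossing j' w'"
    by linarith
  then have "(j, w) = (j', w')"
  proof cases
    case 1
    then show ?thesis using sfun_eq_imp_positive_level[OF d eq] null by simp
  next
    case 2
    then show ?thesis using sfun_eq_imp_positive_level[OF d(2,1) eq[symmetric]] null by simp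
  next
    case 3
    then have "\<bar>w - left_lim u (crossing j w)\<bar> = \<bar>w' - left_lim u (crossing j w)\<bar>"
      using eq by (simp add: sfun_eq)
    then have "w = w'"
      using crossing_between_limits[OF w] crossing_between_limits[OF w'] 3 by (auto simp: abs_if split: if_splits)
    moreover have "j' \<le> N w" using w' \<open>w = w'\<close> by simp
    moreover have "crossing j w = crossing j' w" using 3 \<open>w = w'\<close> by simp
    ultimately show ?thesis using crossing_eq_iff[OF w w'(2)] by simp
  qed
  then show "p = q" using \<open>p = (j, w)\<close> \<open>q = (j', w')\<close> by simp
qed

end

theorem proposition4p5:
  fixes u0 :: "real \<Rightarrow> real" and M :: real and W :: "real set"
    and N :: "real \<Rightarrow> nat" and \<gamma> :: "nat \<Rightarrow> real \<Rightarrow> real \<Rightarrow> real"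
  assumes rcont: "\<forall>x. continuous (at_right x) u0"
    and bv: "pvar u0 UNIV < \<infinity>"
    and supp: "bounded {x. u0 x \<noteq> 0}"
    and range: "\<forall>x. 0 \<le> u0 x \<and> u0 x \<le> M"
    and W_sub: "W \<subseteq> {0..M}"
    and W_full: "{0..M} - W \<in> null_sets lebesgue"
    and fin: "\<forall>w\<in>W. finite (frontier {x. u0 x > w})"
    and N_card: "\<forall>w\<in>W. N w = card (frontier {x. u0 x > w})"
    and pts: "\<forall>w\<in>W. {\<gamma> j w 0 | j. 1 \<le> j \<and> j \<le> N w} = frontier {x. u0 x > w}"
    and ordered: "\<forall>w\<in>W. \<forall>j k. 1 \<le> j \<and> j < k \<and> k \<le> N w \<longrightarrow> \<gamma> j w 0 < \<gamma> k w 0"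
    and up: "\<forall>w\<in>W. \<forall>j. 1 \<le> j \<and> j \<le> N w \<and> odd j \<longrightarrow> crosses_up u0 w (\<gamma> j w 0)"
    and down: "\<forall>w\<in>W. \<forall>j. 1 \<le> j \<and> j \<le> N w \<and> even j \<longrightarrow> crosses_down u0 w (\<gamma> j w 0)"
  shows "countable {w. emeasure lebesgue {x. u0 x = w} \<noteq> 0}
    \<and> muD W N {(j, w). emeasure lebesgue {x. u0 x = w} \<noteq> 0} = 0
    \<and> inj_on (\<lambda>(j, w). sfun u0 \<gamma> j w)
        (Dset W N - {(j, w). emeasure lebesgue {x. u0 x = w} \<noteq> 0})
    \<and> (\<forall>B \<in> sets borel.
        (\<forall>j. {w. (j, w) \<in> Dset W N \<and> sfun u0 \<gamma> j w \<in> B} \<in> sets lebesgue)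
        \<and> muD W N {(j, w). sfun u0 \<gamma> j w \<in> B} = emeasure lebesgue (B \<inter> {0<..TV u0}))"
proof -
  obtain R where R: "0 \<le> R" "\<And>x. R < \<bar>x\<bar> \<Longrightarrow> u0 x = 0"
    using bounded_support_vanishes_outside[OF supp] by blast
  interpret level_crossings u0 M W N \<gamma> R
    by unfold_locales (fact bv rcont R range W_sub W_full pts ordered up down)+
  show ?thesis
    by (intro conjI ballI allI countable_levels_of_positive_measure borel_measurable_u
        muD_positive_measure_levels inj_on_sfun sets_sfun_preimage_slice muD_sfun_preimage)
qed

end
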